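(* Let $\sigma,\zeta$ be the Weierstrass sigma and zeta functions for a lattice $2\omega_1\mathbb Z+2\omega_2\mathbb Z$ with $\mathrm{Im}(\omega_2/\omega_1)>0$, and $\Phi(x,\alpha)=\frac{\sigma(x-\alpha)}{\sigma(x)\sigma(\alpha)}e^{x\zeta(\alpha)}$. For every $n\ge1$, as an identity of meromorphic functions of $x,\alpha_1,\dots,\alpha_n$, $$\frac{\sigma\big(x-\sum_{j=1}^n\alpha_j\big)\prod_{1\le i<j\le n}\sigma(\alpha_i-\alpha_j)}{\sigma(x)\prod_{i=1}^n\sigma(\alpha_i)^n}\,e^{x\sum_{j=1}^n\zeta(\alpha_j)}=\det\Big(\frac{\partial^{i-1}}{\partial x^{i-1}}\Phi(x,\alpha_j)\Big)_{1\le i,j\le n}.$$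
   Context: $\sigma(u)$ is the Weierstrass sigma function of the lattice with periods $2\omega_1,2\omega_2$ and $\zeta(u)=\sigma'(u)/\sigma(u)$. *)

theory Defs
  imports "HOL-Complex_Analysis.Complex_Analysis" "Jordan_Normal_Form.Determinant"
begin

definition lattice :: "complex \<Rightarrow> complex \<Rightarrow> complex set" where
  "lattice w1 w2 = {2 * of_int m * w1 + 2 * of_int k * w2 | m k. True}"

definition wsigma :: "complex \<Rightarrow> complex \<Rightarrow> complex \<Rightarrow> complex" where
  "wsigma w1 w2 u = lim (\<lambda>N::nat. u * (\<Prod>p\<in>({-int N..int N} \<times> {-int N..int N}) - {(0,0)}.
      (let w = 2 * of_int (fst p) * w1 + 2 * of_int (snd p) * w2
       in (1 - u / w) * exp (u / w + u^2 / (2 * w^2)))))"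

definition wzeta :: "complex \<Rightarrow> complex \<Rightarrow> complex \<Rightarrow> complex" where
  "wzeta w1 w2 u = deriv (wsigma w1 w2) u / wsigma w1 w2 u"

definition Phi :: "complex \<Rightarrow> complex \<Rightarrow> complex \<Rightarrow> complex \<Rightarrow> complex" where
  "Phi w1 w2 x a = wsigma w1 w2 (x - a) / (wsigma w1 w2 x * wsigma w1 w2 a) * exp (x * wzeta w1 w2 a)"

end

theory Submission
  imports Defs
begin

(*
  The sigma function is the canonical product over the square shells of lattice points; the
  estimate |2 m w1 + 2 k w2| >= kappa max(|m|, |k|) makes it converge locally uniformly, so sigma
  is entire and odd, vanishes exactly on the lattice and has sigma'(0) = 1.  Translating the square
  of summation by a period changes the partial sums of zeta'' = sum 2/(u - w)^3 only on a boundary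
  annulus of O(N^2) terms of size O(N^-3), so zeta'' is elliptic; since zeta' is even it is elliptic
  too, and integrating twice gives sigma(u + l) = C exp(a u) sigma(u) with C <> 0.

  With this quasi-periodicity the function
    F(x) = sigma(x-a) sigma'(x-b) - sigma'(x-a) sigma(x-b) + (zeta b - zeta a) sigma(x-a) sigma(x-b)
           - sigma(a-b) / (sigma a sigma b) * sigma(x) sigma(x-a-b)
  divided by sigma(x-a) sigma(x-b) is elliptic, its singularities are removable, and it vanishes
  at 0, so F = 0 by Liouville.  Equivalently d/dx (Phi(x,b) / Phi(x,a)) = Phi(a,b) Phi(x-a,b) / Phi(x,a).

  The determinant is the Wronskian W(f_0, ..., f_n) of f_j = Phi(., a_j), and
  W(f_0, ..., f_n) = f_0^(n+1) W((f_1/f_0)', ..., (f_n/f_0)').  By the derivative formula the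
  right-hand side is a Wronskian of the n shifted functions Phi(. - a_0, a_j), so the theorem
  follows by induction on n.
*)

section \<open>The period lattice\<close>

definition lattice_point :: "complex \<Rightarrow> complex \<Rightarrow> int \<times> int \<Rightarrow> complex" where
  "lattice_point w1 w2 p = 2 * of_int (fst p) * w1 + 2 * of_int (snd p) * w2"

lemma lattice_eq_range: "lattice w1 w2 = range (lattice_point w1 w2)"
  unfolding lattice_def lattice_point_def image_def by force

lemma lattice_point_zero [simp]: "lattice_point w1 w2 (0, 0) = 0"
  by (simp add: lattice_point_def)

lemma lattice_point_add: "lattice_point w1 w2 (p + q) = lattice_point w1 w2 p + lattice_point w1 w2 q"
  by (cases p; cases q) (simp add: lattice_point_def algebra_simps)

lemma lattice_point_minus: "lattice_point w1 w2 (- p) = - lattice_point w1 w2 p"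
  by (cases p) (simp add: lattice_point_def algebra_simps)

lemma lattice_point_diff: "lattice_point w1 w2 (p - q) = lattice_point w1 w2 p - lattice_point w1 w2 q"
  by (cases p; cases q) (simp add: lattice_point_def algebra_simps)

definition sup_norm :: "int \<times> int \<Rightarrow> int" where
  "sup_norm p = max \<bar>fst p\<bar> \<bar>snd p\<bar>"

lemma sup_norm_add_le: "sup_norm (p + q) \<le> sup_norm p + sup_norm q"
  by (cases p; cases q) (simp add: sup_norm_def; arith)

lemma sup_norm_diff_le: "sup_norm (p - q) \<le> sup_norm p + sup_norm q"
  by (cases p; cases q) (simp add: sup_norm_def; arith)

definition index_square :: "nat \<Rightarrow> (int \<times> int) set" where
  "index_square N = {-int N..int N} \<times> {-int N..int N}"

lemma mem_index_square: "p \<in> index_square N \<longleftrightarrow> sup_norm p \<le> int N"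
  by (cases p) (auto simp: index_square_def sup_norm_def)

lemma index_square_0 [simp]: "index_square 0 = {(0, 0)}"
  by (auto simp: index_square_def)

lemma index_square_mono: "k \<le> N \<Longrightarrow> index_square k \<subseteq> index_square N"
  by (auto simp: index_square_def)

lemma finite_index_square [simp]: "finite (index_square N)"
  by (simp add: index_square_def)

lemma card_index_square: "card (index_square N) = (2 * N + 1)^2"
  by (simp add: index_square_def card_cartesian_product power2_eq_square nat_add_distrib nat_mult_distrib)

definition index_shell :: "nat \<Rightarrow> (int \<times> int) set" where
  "index_shell k = index_square (Suc k) - index_square k"

lemma finite_index_shell [simp]: "finite (index_shell k)"
  by (simp add: index_shell_def)

lemma card_index_shell: "card (index_shell k) = 8 * (k + 1)"
proof -
  have "card (index_shell k) = card (index_square (Suc k)) - card (index_square k)"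
    unfolding index_shell_def using index_square_mono[of k "Suc k"] by (intro card_Diff_subset) auto
  also have "\<dots> = 8 * (k + 1)" by (simp add: card_index_square power2_eq_square algebra_simps)
  finally show ?thesis .
qed

lemma sup_norm_ge_if_not_in_index_square:
  "p \<notin> index_square k \<Longrightarrow> real (Suc k) \<le> real_of_int (sup_norm p)"
  by (simp add: mem_index_square)

lemma in_some_index_shell:
  assumes "p \<noteq> (0, 0)"
  obtains k where "p \<in> index_shell k"
proof -
  have "sup_norm p > 0" using assms by (cases p) (auto simp: sup_norm_def)
  then obtain k where "nat (sup_norm p) = Suc k" using gr0_implies_Suc by fastforce
  hence "p \<in> index_shell k" by (auto simp: index_shell_def mem_index_square)
  thus thesis by (rule that)
qed

lemma prod_index_square_shells:
  "(\<Prod>p\<in>index_square N - {(0, 0)}. f p) = (\<Prod>k<N. \<Prod>p\<in>index_shell k. f p)"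
proof (induction N)
  case (Suc N)
  have "index_square (Suc N) - {(0, 0)} = (index_square N - {(0, 0)}) \<union> index_shell N"
    using index_square_mono[of N "Suc N"] index_square_mono[of 0 N] by (auto simp: index_shell_def)
  hence "(\<Prod>p\<in>index_square (Suc N) - {(0, 0)}. f p)
           = (\<Prod>p\<in>index_square N - {(0, 0)}. f p) * (\<Prod>p\<in>index_shell N. f p)"
    by (simp add: prod.union_disjoint) (subst prod.union_disjoint; auto simp: index_shell_def)
  thus ?case using Suc by simp
qed simp

lemma norm_ge_by_two_estimates:
  fixes t s m k :: real and z :: complex
  assumes "t > 0" "s \<ge> t" "norm z \<ge> t * \<bar>k\<bar>" "norm z \<ge> \<bar>m\<bar> - s * \<bar>k\<bar>"
  shows "norm z \<ge> t / (1 + s + t) * max \<bar>m\<bar> \<bar>k\<bar>"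
proof -
  have "s * norm z \<ge> s * (t * \<bar>k\<bar>)" "t * norm z \<ge> t * (\<bar>m\<bar> - s * \<bar>k\<bar>)"
    using assms by (intro mult_left_mono; simp)+
  hence "(s + t) * norm z \<ge> t * \<bar>m\<bar>" by (simp add: algebra_simps)
  hence "t / (s + t) * \<bar>m\<bar> \<le> norm z" using assms by (simp add: field_simps)
  moreover have "t / (1 + s + t) * \<bar>m\<bar> \<le> t / (s + t) * \<bar>m\<bar>"
    using assms by (intro mult_right_mono divide_left_mono) auto
  moreover have "t / (1 + s + t) * \<bar>k\<bar> \<le> t * \<bar>k\<bar>"
    using assms by (intro mult_right_mono) (auto simp: field_simps)
  ultimately show ?thesis using assms by (simp add: max_def)
qed

locale period_lattice =
  fixes w1 w2 :: complex
  assumes Im_ratio_pos: "Im (w2 / w1) > 0"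
begin

abbreviation \<Lambda> where "\<Lambda> \<equiv> lattice w1 w2"
abbreviation \<sigma> where "\<sigma> \<equiv> wsigma w1 w2"
abbreviation \<zeta> where "\<zeta> \<equiv> wzeta w1 w2"

lemma w1_nonzero: "w1 \<noteq> 0"
  using Im_ratio_pos by auto

lemma norm_lattice_point_lower_bound:
  obtains c where "c > 0" "\<And>p. norm (lattice_point w1 w2 p) \<ge> c * real_of_int (sup_norm p)"
proof -
  define \<tau> where "\<tau> = w2 / w1"
  define t where "t = Im \<tau>"
  define s where "s = norm \<tau>"
  have t: "t > 0" using Im_ratio_pos by (simp add: t_def \<tau>_def)
  have st: "s \<ge> t" unfolding s_def t_def by (meson abs_Im_le_cmod abs_ge_self order.trans)
  define c where "c = t / (1 + s + t)"
  have bound: "norm (of_int m + of_int k * \<tau>) \<ge> c * max \<bar>real_of_int m\<bar> \<bar>real_of_int k\<bar>" for m k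
  proof -
    let ?z = "of_int m + of_int k * \<tau> :: complex"
    have "t * \<bar>real_of_int k\<bar> = \<bar>Im ?z\<bar>" using t by (simp add: t_def abs_mult)
    hence "norm ?z \<ge> t * \<bar>real_of_int k\<bar>" using abs_Im_le_cmod by metis
    moreover have "norm (of_int m :: complex) \<le> norm ?z + norm (of_int k * \<tau>)"
      by (metis add_diff_cancel norm_triangle_ineq4)
    hence "norm ?z \<ge> \<bar>real_of_int m\<bar> - s * \<bar>real_of_int k\<bar>"
      by (simp add: s_def norm_mult mult.commute)
    ultimately show ?thesis unfolding c_def by (rule norm_ge_by_two_estimates[OF t st])
  qed
  show ?thesis
  proof (rule that[of "2 * norm w1 * c"])
    show "2 * norm w1 * c > 0" using t st w1_nonzero by (simp add: c_def)
    fix p :: "int \<times> int"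
    obtain m k where p: "p = (m, k)" by force
    have "lattice_point w1 w2 p = 2 * w1 * (of_int m + of_int k * \<tau>)"
      using w1_nonzero by (simp add: p lattice_point_def \<tau>_def field_simps)
    hence "norm (lattice_point w1 w2 p) = 2 * norm w1 * norm (of_int m + of_int k * \<tau>)"
      by (simp add: norm_mult)
    also have "\<dots> \<ge> 2 * norm w1 * (c * max \<bar>real_of_int m\<bar> \<bar>real_of_int k\<bar>)"
      by (intro mult_left_mono bound) auto
    finally show "norm (lattice_point w1 w2 p) \<ge> 2 * norm w1 * c * real_of_int (sup_norm p)"
      by (simp add: p sup_norm_def mult.assoc)
  qed
qed

definition \<kappa> :: real where
  "\<kappa> = (SOME c. c > 0 \<and> (\<forall>p. norm (lattice_point w1 w2 p) \<ge> c * real_of_int (sup_norm p)))"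

lemma kappa_pos: "\<kappa> > 0"
  and norm_lattice_point_ge: "norm (lattice_point w1 w2 p) \<ge> \<kappa> * real_of_int (sup_norm p)"
proof -
  have "\<exists>c. c > 0 \<and> (\<forall>p. norm (lattice_point w1 w2 p) \<ge> c * real_of_int (sup_norm p))"
    using norm_lattice_point_lower_bound by metis
  from someI_ex[OF this] show "\<kappa> > 0" "norm (lattice_point w1 w2 p) \<ge> \<kappa> * real_of_int (sup_norm p)"
    unfolding \<kappa>_def by blast+
qed

lemma norm_lattice_point_ge_if_not_in_index_square:
  "p \<notin> index_square k \<Longrightarrow> norm (lattice_point w1 w2 p) \<ge> \<kappa> * real (Suc k)"
  using norm_lattice_point_ge[of p] sup_norm_ge_if_not_in_index_square[of p k] kappa_pos
  by (meson mult_left_mono less_imp_le order.trans)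

lemma lattice_point_eq_0_iff: "lattice_point w1 w2 p = 0 \<longleftrightarrow> p = (0, 0)"
proof
  assume "lattice_point w1 w2 p = 0"
  with norm_lattice_point_ge[of p] kappa_pos have "sup_norm p \<le> 0"
    by (simp add: mult_le_0_iff)
  thus "p = (0, 0)" by (cases p) (auto simp: sup_norm_def)
qed auto

lemma lattice_point_in_lattice [simp]: "lattice_point w1 w2 p \<in> \<Lambda>"
  by (simp add: lattice_eq_range)

lemma zero_in_lattice [simp]: "0 \<in> \<Lambda>"
  using lattice_point_in_lattice[of "(0, 0)"] by simp

lemma lattice_add: "u \<in> \<Lambda> \<Longrightarrow> v \<in> \<Lambda> \<Longrightarrow> u + v \<in> \<Lambda>"
  by (auto simp: lattice_eq_range lattice_point_add[symmetric])

lemma lattice_uminus: "u \<in> \<Lambda> \<Longrightarrow> - u \<in> \<Lambda>"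
  by (auto simp: lattice_eq_range lattice_point_minus[symmetric])

lemma lattice_diff: "u \<in> \<Lambda> \<Longrightarrow> v \<in> \<Lambda> \<Longrightarrow> u - v \<in> \<Lambda>"
  by (auto simp: lattice_eq_range lattice_point_diff[symmetric])

lemma add_lattice_iff: "v \<in> \<Lambda> \<Longrightarrow> u + v \<in> \<Lambda> \<longleftrightarrow> u \<in> \<Lambda>"
  by (metis add_diff_cancel lattice_add lattice_diff)

lemma finite_lattice_inter_cball: "finite (\<Lambda> \<inter> cball z r)"
proof -
  define M where "M = nat \<lceil>(r + norm z) / \<kappa>\<rceil>"
  have "\<Lambda> \<inter> cball z r \<subseteq> lattice_point w1 w2 ` index_square M"
  proof
    fix u assume u: "u \<in> \<Lambda> \<inter> cball z r"
    then obtain p where p: "u = lattice_point w1 w2 p" by (auto simp: lattice_eq_range)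
    have "norm u \<le> r + norm z"
      using u norm_triangle_ineq2[of u z] by (auto simp: dist_norm norm_minus_commute)
    with norm_lattice_point_ge[of p] p have "\<kappa> * real_of_int (sup_norm p) \<le> r + norm z" by simp
    hence "real_of_int (sup_norm p) \<le> (r + norm z) / \<kappa>"
      by (simp add: pos_le_divide_eq[OF kappa_pos] mult.commute)
    hence "sup_norm p \<le> int M" unfolding M_def by linarith
    thus "u \<in> lattice_point w1 w2 ` index_square M" using p by (auto simp: mem_index_square)
  qed
  thus ?thesis by (rule finite_subset) auto
qed

lemma not_islimpt_lattice: "\<not> z islimpt \<Lambda>"
proof -
  have "finite (\<Lambda> \<inter> ball z 1)"
    by (rule finite_subset[OF _ finite_lattice_inter_cball[of z 1]]) auto
  thus ?thesis unfolding islimpt_eq_infinite_ball by (intro notI) (drule spec[of _ 1], simp)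
qed

lemma closed_lattice: "closed \<Lambda>"
  using not_islimpt_lattice closed_limpt by blast

lemma open_lattice_complement: "open (- \<Lambda>)"
  using closed_lattice by (simp add: open_Compl)

lemma connected_lattice_complement: "connected (- \<Lambda>)"
  using connected_open_diff_countable[of UNIV \<Lambda>]
  by (simp add: lattice_eq_range Compl_eq_Diff_UNIV connected_UNIV)

lemma lattice_ne_UNIV: "\<Lambda> \<noteq> UNIV"
proof
  assume "\<Lambda> = UNIV"
  moreover have "countable \<Lambda>" by (simp add: lattice_eq_range)
  ultimately show False using uncountable_UNIV_complex by simp
qed

lemma eventually_not_in_lattice: "eventually (\<lambda>y. y \<notin> \<Lambda>) (at z)"
  using not_islimpt_lattice[of z] by (simp add: islimpt_iff_eventually)

lemma eventually_shift_not_in_lattice: "eventually (\<lambda>y. y - a \<notin> \<Lambda>) (at z)"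
proof -
  have "eventually (\<lambda>y. y \<notin> \<Lambda>) (filtermap (\<lambda>x. x - a) (at z))"
    using eventually_not_in_lattice[of "z - a"] by (simp add: filtermap_at_shift)
  thus ?thesis by (simp add: eventually_filtermap)
qed

lemma constant_on_lattice_complement:
  assumes "\<And>z. z \<notin> \<Lambda> \<Longrightarrow> (f has_field_derivative 0) (at z)"
  obtains C where "\<And>z. z \<notin> \<Lambda> \<Longrightarrow> f z = C"
proof -
  have "f constant_on (- \<Lambda>)"
    using assms connected_lattice_complement open_lattice_complement
    by (intro has_field_derivative_0_imp_constant_on) auto
  thus ?thesis using that by (auto simp: constant_on_def)
qed

end

section \<open>The canonical product\<close>

text \<open>Generalises the library lemma \<open>norm_prod_minus1_le_prod_minus1\<close>, which is stated for index type \<open>nat\<close> only.\<close>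
lemma norm_prod_one_plus_minus1_le:
  fixes f :: "'a \<Rightarrow> 'b :: {real_normed_div_algebra, comm_ring_1}"
  shows "norm ((\<Prod>x\<in>A. 1 + f x) - 1) \<le> (\<Prod>x\<in>A. 1 + norm (f x)) - 1"
proof (induction A rule: infinite_finite_induct)
  case (insert x A)
  define P where "P = (\<Prod>x\<in>A. 1 + f x)"
  define P' where "P' = (\<Prod>x\<in>A. 1 + norm (f x))"
  have "norm P \<le> (\<Prod>x\<in>A. norm (1 + f x))" unfolding P_def by (rule norm_prod_le)
  also have "\<dots> \<le> P'" unfolding P'_def by (intro prod_mono) (auto intro: norm_triangle_le)
  finally have norm_P: "norm P \<le> P'" .
  have "(\<Prod>x\<in>insert x A. 1 + f x) - 1 = (P - 1) + f x * P"
    using insert by (simp add: P_def algebra_simps)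
  hence "norm ((\<Prod>x\<in>insert x A. 1 + f x) - 1) \<le> norm (P - 1) + norm (f x) * norm P"
    by (metis norm_mult norm_triangle_ineq)
  also have "\<dots> \<le> (P' - 1) + norm (f x) * P'"
    using insert norm_P by (intro add_mono mult_left_mono) (auto simp: P_def P'_def)
  also have "\<dots> = (\<Prod>x\<in>insert x A. 1 + norm (f x)) - 1"
    using insert by (simp add: P'_def algebra_simps)
  finally show ?case .
qed auto

definition sigma_factor :: "complex \<Rightarrow> complex \<Rightarrow> complex \<Rightarrow> int \<times> int \<Rightarrow> complex" where
  "sigma_factor w1 w2 u p = weierstrass_factor 2 (u / lattice_point w1 w2 p)"

lemma sigma_factor_explicit:
  "sigma_factor w1 w2 u p = (1 - u / w) * exp (u / w + u^2 / (2 * w^2))"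
  if "w = lattice_point w1 w2 p"
  by (simp add: that sigma_factor_def weierstrass_factor_def power_divide numeral_2_eq_2 field_simps)

definition sigma_partial :: "complex \<Rightarrow> complex \<Rightarrow> nat \<Rightarrow> complex \<Rightarrow> complex" where
  "sigma_partial w1 w2 N u = u * (\<Prod>p\<in>index_square N - {(0, 0)}. sigma_factor w1 w2 u p)"

lemma wsigma_eq_lim: "wsigma w1 w2 u = lim (\<lambda>N. sigma_partial w1 w2 N u)"
  by (simp add: wsigma_def sigma_partial_def sigma_factor_explicit[OF refl]
      lattice_point_def index_square_def Let_def)

context period_lattice
begin

definition shell_factor :: "nat \<Rightarrow> complex \<Rightarrow> complex" where
  "shell_factor k u = (\<Prod>p\<in>index_shell k. sigma_factor w1 w2 u p)"

lemma sigma_partial_eq_shells: "sigma_partial w1 w2 N u = u * (\<Prod>k<N. shell_factor k u)"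
  by (simp add: sigma_partial_def shell_factor_def prod_index_square_shells)

lemma norm_lattice_point_shell: "p \<in> index_shell k \<Longrightarrow> norm (lattice_point w1 w2 p) \<ge> \<kappa> * real (Suc k)"
  unfolding index_shell_def by (blast intro: norm_lattice_point_ge_if_not_in_index_square)

lemma lattice_point_shell_nonzero: "p \<in> index_shell k \<Longrightarrow> lattice_point w1 w2 p \<noteq> 0"
  using index_square_mono[of 0 k] by (auto simp: index_shell_def lattice_point_eq_0_iff)

lemma norm_sigma_factor_minus1_le:
  assumes p: "p \<in> index_shell k" and u: "norm u \<le> R" and k: "\<kappa> * real (Suc k) \<ge> 2 * R"
  shows "norm (sigma_factor w1 w2 u p - 1) \<le> 3 * (R / (\<kappa> * real (Suc k)))^3"
proof -
  have pos: "\<kappa> * real (Suc k) > 0" using kappa_pos by simp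
  have "R \<ge> 0" using u by (meson norm_ge_zero order_trans)
  hence "norm (u / lattice_point w1 w2 p) \<le> R / (\<kappa> * real (Suc k))"
    unfolding norm_divide using norm_lattice_point_shell[OF p] u pos by (intro frac_le) auto
  moreover have "R / (\<kappa> * real (Suc k)) \<le> 1/2" using k pos by (simp add: field_simps)
  ultimately have "norm (u / lattice_point w1 w2 p) \<le> 1/2" by linarith
  hence "norm (sigma_factor w1 w2 u p - 1) \<le> 3 * norm (u / lattice_point w1 w2 p) ^ Suc 2"
    unfolding sigma_factor_def by (rule weierstrass_factor_bound)
  also have "\<dots> \<le> 3 * (R / (\<kappa> * real (Suc k)))^3"
    using \<open>norm (u / lattice_point w1 w2 p) \<le> R / (\<kappa> * real (Suc k))\<close> by (simp add: power_mono)
  finally show ?thesis .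
qed

definition shell_bound :: "real \<Rightarrow> nat \<Rightarrow> real" where
  "shell_bound R k = 48 * R^3 / (\<kappa>^3 * real (Suc k)^2)"

lemma summable_shell_bound: "summable (shell_bound R)"
proof -
  have "summable (\<lambda>k. 1 / real (Suc k)^2)"
    using summable_ignore_initial_segment[OF inverse_power_summable[of 2], of 1]
    by (simp add: field_simps)
  from summable_mult[OF this, of "48 * R^3 / \<kappa>^3"] show ?thesis
    unfolding shell_bound_def by (simp add: divide_simps)
qed

text \<open>A shell has \<open>8 (k + 1)\<close> points, each contributing \<open>O(k\<^sup>-\<^sup>3)\<close>.\<close>
lemma norm_shell_factor_minus1_le:
  assumes u: "norm u \<le> R" and k: "\<kappa> * real (Suc k) \<ge> 2 * R" "48 * R^3 \<le> \<kappa>^3 * real (Suc k)^2"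
  shows "norm (shell_factor k u - 1) \<le> shell_bound R k"
proof -
  define A where "A = index_shell k"
  define s where "s = real (Suc k)"
  define x where "x = 24 * R^3 / (\<kappa>^3 * s^2)"
  have s: "s > 0" by (simp add: s_def)
  have "norm (shell_factor k u - 1) = norm ((\<Prod>p\<in>A. 1 + (sigma_factor w1 w2 u p - 1)) - 1)"
    by (simp add: shell_factor_def A_def)
  also have "\<dots> \<le> (\<Prod>p\<in>A. 1 + norm (sigma_factor w1 w2 u p - 1)) - 1"
    by (rule norm_prod_one_plus_minus1_le)
  also have "(\<Prod>p\<in>A. 1 + norm (sigma_factor w1 w2 u p - 1)) \<le> (\<Prod>p\<in>A. exp (norm (sigma_factor w1 w2 u p - 1)))"
    by (intro prod_mono) auto
  also have "\<dots> = exp (\<Sum>p\<in>A. norm (sigma_factor w1 w2 u p - 1))"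
    by (simp add: exp_sum A_def)
  also have "(\<Sum>p\<in>A. norm (sigma_factor w1 w2 u p - 1)) \<le> (\<Sum>p\<in>A. 3 * (R / (\<kappa> * s))^3)"
    using norm_sigma_factor_minus1_le[OF _ u k(1)] by (intro sum_mono) (auto simp: A_def s_def)
  also have "\<dots> = 8 * s * (3 * (R / (\<kappa> * s))^3)"
    by (simp add: A_def card_index_shell s_def)
  also have "\<dots> = x"
    using s kappa_pos by (simp add: x_def power_divide power_mult_distrib power3_eq_cube power2_eq_square mult_ac)
  finally have "norm (shell_factor k u - 1) \<le> exp x - 1" by simp
  moreover have "R \<ge> 0" using u by (meson norm_ge_zero order_trans)
  hence "x \<ge> 0" "x \<le> 1/2"
    using k(2) kappa_pos by (simp_all add: x_def s_def divide_le_eq)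
  hence "exp x \<le> 1 + 2 * x" using exp_bound_lemma[of x] by simp
  ultimately show ?thesis by (simp add: x_def shell_bound_def s_def)
qed

lemma eventually_norm_shell_factor_le:
  "eventually (\<lambda>k. \<forall>u\<in>cball 0 R. norm (shell_factor k u - 1) \<le> shell_bound R k) sequentially"
proof -
  have "filterlim (\<lambda>k. \<kappa> * real (Suc k)) at_top sequentially"
       "filterlim (\<lambda>k. \<kappa>^3 * real (Suc k)^2) at_top sequentially"
    using kappa_pos
    by (intro filterlim_tendsto_pos_mult_at_top[OF tendsto_const] filterlim_pow_at_top
        filterlim_compose[OF filterlim_real_sequentially filterlim_Suc]; simp)+
  hence "eventually (\<lambda>k. \<kappa> * real (Suc k) \<ge> 2 * R) sequentially"
        "eventually (\<lambda>k. 48 * R^3 \<le> \<kappa>^3 * real (Suc k)^2) sequentially"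
    by (simp_all add: filterlim_at_top)
  thus ?thesis by eventually_elim (auto intro: norm_shell_factor_minus1_le)
qed

lemma shell_factor_holomorphic [holomorphic_intros]: "shell_factor k holomorphic_on A"
  unfolding shell_factor_def sigma_factor_def
  by (intro holomorphic_intros) (auto dest: lattice_point_shell_nonzero)

lemma uniformly_convergent_shell_products:
  "uniformly_convergent_on (cball 0 R) (\<lambda>N u. \<Prod>k<N. shell_factor k u)"
proof (rule uniformly_convergent_on_prod')
  have "eventually (\<lambda>k. \<forall>u\<in>cball 0 R. norm (norm (shell_factor k u - 1)) \<le> shell_bound R k) sequentially"
    using eventually_norm_shell_factor_le by simp
  thus "uniformly_convergent_on (cball 0 R) (\<lambda>N u. \<Sum>k<N. norm (shell_factor k u - 1))"
    by (rule uniformly_convergentI[OF Weierstrass_m_test_ev[OF _ summable_shell_bound]])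
qed (auto intro: holomorphic_on_imp_continuous_on shell_factor_holomorphic)

lemma sigma_partial_holomorphic [holomorphic_intros]: "sigma_partial w1 w2 N holomorphic_on A"
proof -
  have "sigma_partial w1 w2 N = (\<lambda>u. u * (\<Prod>k<N. shell_factor k u))"
    by (simp add: fun_eq_iff sigma_partial_eq_shells)
  thus ?thesis by (auto intro!: holomorphic_intros)
qed

lemma sigma_partial_uniform_limit:
  assumes "R > 0"
  shows "uniform_limit (cball 0 R) (\<lambda>N. sigma_partial w1 w2 N) \<sigma> sequentially"
proof -
  obtain g where g: "uniform_limit (cball 0 R) (\<lambda>N u. \<Prod>k<N. shell_factor k u) g sequentially"
    using uniformly_convergent_shell_products[of R] by (auto simp: uniformly_convergent_on_def)
  have sigma_eq: "\<sigma> u = u * g u" if "u \<in> cball 0 R" for u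
    unfolding wsigma_eq_lim sigma_partial_eq_shells
    by (intro limI tendsto_mult tendsto_const tendsto_uniform_limitI[OF g that])
  show ?thesis
  proof (rule uniform_limitI)
    fix e :: real assume e: "e > 0"
    have "e / (R + 1) > 0" using e assms by simp
    from uniform_limitD[OF g this]
    show "\<forall>\<^sub>F N in sequentially. \<forall>u\<in>cball 0 R. dist (sigma_partial w1 w2 N u) (\<sigma> u) < e"
    proof eventually_elim
      case (elim N)
      show ?case
      proof
        fix u :: complex assume u: "u \<in> cball 0 R"
        have "dist (sigma_partial w1 w2 N u) (\<sigma> u) = norm u * dist (\<Prod>k<N. shell_factor k u) (g u)"
          by (simp add: sigma_partial_eq_shells sigma_eq[OF u] dist_norm norm_mult[symmetric] right_diff_distrib)
        also have "\<dots> \<le> R * (e / (R + 1))"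
          using elim u assms by (intro mult_mono) (auto intro: less_imp_le)
        also have "\<dots> < e" using e assms by (simp add: field_simps)
        finally show "dist (sigma_partial w1 w2 N u) (\<sigma> u) < e" .
      qed
    qed
  qed
qed

lemma sigma_holomorphic_UNIV: "\<sigma> holomorphic_on UNIV"
proof (rule holomorphic_uniform_sequence[where f = "\<lambda>N. sigma_partial w1 w2 N"])
  fix x :: complex
  have "uniform_limit (cball x 1) (\<lambda>N. sigma_partial w1 w2 N) \<sigma> sequentially"
    by (rule uniform_limit_on_subset[OF sigma_partial_uniform_limit[of "norm x + 1"]])
       (auto simp: cball_subset_cball_iff add_nonneg_pos)
  thus "\<exists>d>0. cball x d \<subseteq> UNIV \<and> uniform_limit (cball x d) (\<lambda>N. sigma_partial w1 w2 N) \<sigma> sequentially"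
    by (intro exI[of _ 1]) auto
qed (auto intro: sigma_partial_holomorphic)

lemma sigma_holomorphic [holomorphic_intros]: "f holomorphic_on A \<Longrightarrow> (\<lambda>x. \<sigma> (f x)) holomorphic_on A"
  using holomorphic_on_compose[of f A \<sigma>] holomorphic_on_subset[OF sigma_holomorphic_UNIV]
  by (simp add: o_def)

lemma deriv_sigma_holomorphic [holomorphic_intros]:
  "f holomorphic_on A \<Longrightarrow> (\<lambda>x. deriv \<sigma> (f x)) holomorphic_on A"
  using holomorphic_on_compose[of f A "deriv \<sigma>"]
    holomorphic_on_subset[OF holomorphic_deriv[OF sigma_holomorphic_UNIV open_UNIV]]
  by (simp add: o_def)

lemma sigma_isCont [continuous_intros]: "isCont \<sigma> z"
  using holomorphic_on_imp_continuous_on[OF sigma_holomorphic_UNIV]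
  by (simp add: continuous_on_eq_continuous_at)

lemma higher_deriv_sigma_has_derivative:
  "((deriv ^^ n) \<sigma> has_field_derivative (deriv ^^ Suc n) \<sigma> z) (at z)"
  using holomorphic_higher_deriv[OF sigma_holomorphic_UNIV open_UNIV, of n]
  by (auto dest: holomorphic_derivI)

lemma sigma_has_derivative [derivative_intros]: "(\<sigma> has_field_derivative deriv \<sigma> z) (at z)"
  using higher_deriv_sigma_has_derivative[of 0] by simp

lemma sigma_diff_has_derivative: "((\<lambda>y. \<sigma> (y - b)) has_field_derivative deriv \<sigma> (x - b)) (at x)"
  using DERIV_shift[of \<sigma> "deriv \<sigma> (x - b)" x "- b"] sigma_has_derivative[of "x - b"] by simp

lemma sigma_continuous [continuous_intros]:
  "continuous (at x within s) f \<Longrightarrow> continuous (at x within s) (\<lambda>x. \<sigma> (f x))"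
  by (rule continuous_within_compose3[OF sigma_isCont])

lemma higher_deriv_sigma_partial_tendsto:
  "(\<lambda>N. (deriv ^^ m) (sigma_partial w1 w2 N) z) \<longlonglongrightarrow> (deriv ^^ m) \<sigma> z"
proof (rule higher_deriv_complex_uniform_limit)
  show "uniform_limit (ball 0 (norm z + 1)) (\<lambda>N. sigma_partial w1 w2 N) \<sigma> sequentially"
    by (rule uniform_limit_on_subset[OF sigma_partial_uniform_limit[of "norm z + 1"]])
       (auto simp: add_nonneg_pos)
  show "\<forall>\<^sub>F N in sequentially. sigma_partial w1 w2 N holomorphic_on ball 0 (norm z + 1)"
    by (intro always_eventually allI sigma_partial_holomorphic)
qed auto

lemma sigma_partial_tendsto: "(\<lambda>N. sigma_partial w1 w2 N z) \<longlonglongrightarrow> \<sigma> z"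
  using higher_deriv_sigma_partial_tendsto[of 0 z] by simp

lemma convergent_prod_shell_factor: "convergent_prod (\<lambda>k. shell_factor k u)"
proof -
  have "eventually (\<lambda>k. norm (norm (shell_factor k u - 1)) \<le> shell_bound (norm u) k) sequentially"
    using eventually_norm_shell_factor_le[of "norm u"] by eventually_elim auto
  hence "summable (\<lambda>k. norm (shell_factor k u - 1))"
    by (rule summable_comparison_test_ev[OF _ summable_shell_bound])
  thus ?thesis
    using abs_convergent_prod_conv_summable abs_convergent_prod_imp_convergent_prod by blast
qed

lemma sigma_eq_infinite_product: "\<sigma> u = u * (\<Prod>k. shell_factor k u)"
proof -
  have "(\<lambda>n. \<Prod>k<Suc n. shell_factor k u) \<longlonglongrightarrow> (\<Prod>k. shell_factor k u)"
    using convergent_prod_LIMSEQ[OF convergent_prod_shell_factor] by (simp add: lessThan_Suc_atMost)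
  hence "(\<lambda>n. \<Prod>k<n. shell_factor k u) \<longlonglongrightarrow> (\<Prod>k. shell_factor k u)"
    by (rule filterlim_sequentially_Suc[THEN iffD1])
  hence "(\<lambda>N. sigma_partial w1 w2 N u) \<longlonglongrightarrow> u * (\<Prod>k. shell_factor k u)"
    unfolding sigma_partial_eq_shells by (intro tendsto_mult tendsto_const)
  with sigma_partial_tendsto[of u] show ?thesis using LIMSEQ_unique by blast
qed

lemma shell_factor_eq_0_iff: "shell_factor k u = 0 \<longleftrightarrow> (\<exists>p\<in>index_shell k. u = lattice_point w1 w2 p)"
proof -
  have "sigma_factor w1 w2 u p = 0 \<longleftrightarrow> u = lattice_point w1 w2 p" if "p \<in> index_shell k" for p
    using lattice_point_shell_nonzero[OF that] by (simp add: sigma_factor_def)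
  thus ?thesis by (simp add: shell_factor_def)
qed

lemma sigma_eq_0_iff: "\<sigma> u = 0 \<longleftrightarrow> u \<in> \<Lambda>"
proof -
  have prod_eq_0_iff: "(\<Prod>k. shell_factor k u) = 0 \<longleftrightarrow> (\<exists>k. shell_factor k u = 0)"
    using has_prod_eq_0_iff[OF convergent_prod_has_prod[OF convergent_prod_shell_factor]]
    by (metis rangeE rangeI)
  show ?thesis
  proof
    assume "\<sigma> u = 0"
    hence "u = 0 \<or> (\<exists>k. shell_factor k u = 0)"
      by (simp add: sigma_eq_infinite_product prod_eq_0_iff)
    thus "u \<in> \<Lambda>" by (auto simp: shell_factor_eq_0_iff)
  next
    assume "u \<in> \<Lambda>"
    then obtain p where p: "u = lattice_point w1 w2 p" by (auto simp: lattice_eq_range)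
    show "\<sigma> u = 0"
    proof (cases "p = (0, 0)")
      case False
      then obtain k where "p \<in> index_shell k" by (rule in_some_index_shell)
      hence "shell_factor k u = 0" using p by (auto simp: shell_factor_eq_0_iff)
      thus ?thesis by (auto simp: sigma_eq_infinite_product prod_eq_0_iff)
    qed (simp add: p sigma_eq_infinite_product)
  qed
qed

lemma sigma_nonzero: "u \<notin> \<Lambda> \<Longrightarrow> \<sigma> u \<noteq> 0"
  by (simp add: sigma_eq_0_iff)

lemma sigma_0 [simp]: "\<sigma> 0 = 0"
  by (simp add: sigma_eq_0_iff)

lemma sigma_partial_minus: "sigma_partial w1 w2 N (- u) = - sigma_partial w1 w2 N u"
proof -
  have "(\<Prod>p\<in>index_square N - {(0, 0)}. sigma_factor w1 w2 (- u) p)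
      = (\<Prod>p\<in>index_square N - {(0, 0)}. sigma_factor w1 w2 u p)"
    by (rule prod.reindex_bij_witness[of _ uminus uminus])
       (auto simp: index_square_def sigma_factor_def lattice_point_minus)
  thus ?thesis by (simp add: sigma_partial_def)
qed

lemma sigma_minus: "\<sigma> (- u) = - \<sigma> u"
  using sigma_partial_tendsto[of "- u"] tendsto_minus[OF sigma_partial_tendsto[of u]]
  by (simp add: sigma_partial_minus LIMSEQ_unique)

lemma higher_deriv_sigma_minus: "(deriv ^^ n) \<sigma> (- z) = - ((- 1) ^ n * (deriv ^^ n) \<sigma> z)"
proof -
  have "(deriv ^^ n) (\<lambda>w. \<sigma> ((- 1) * w + 0)) z = (- 1) ^ n * (deriv ^^ n) \<sigma> ((- 1) * z + 0)"
    by (rule higher_deriv_compose_linear'[where T = UNIV and S = UNIV]) (auto intro: sigma_holomorphic_UNIV)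
  moreover have "(\<lambda>w. \<sigma> ((- 1) * w + 0)) = (\<lambda>w. (- 1) * \<sigma> w)"
    by (simp add: sigma_minus)
  moreover have "(deriv ^^ n) (\<lambda>w. (- 1) * \<sigma> w) z = - (deriv ^^ n) \<sigma> z"
    using higher_deriv_cmult[OF sigma_holomorphic_UNIV, of z n "- 1"] by simp
  ultimately have "(- 1) ^ n * ((- 1) ^ n * (deriv ^^ n) \<sigma> (- z)) = (- 1) ^ n * (- (deriv ^^ n) \<sigma> z)"
    by simp
  thus ?thesis by (simp add: power_mult_distrib[symmetric])
qed

lemma deriv_sigma_minus: "deriv \<sigma> (- u) = deriv \<sigma> u"
  using higher_deriv_sigma_minus[of 1 u] by simp

lemma deriv_sigma_partial_0: "deriv (sigma_partial w1 w2 N) 0 = 1"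
proof -
  define h where "h = (\<lambda>u. \<Prod>p\<in>index_square N - {(0, 0)}. sigma_factor w1 w2 u p)"
  have "h holomorphic_on UNIV"
    unfolding h_def sigma_factor_def by (intro holomorphic_intros) (auto simp: lattice_point_eq_0_iff)
  hence "((\<lambda>u. u * h u) has_field_derivative 1 * h 0 + deriv h 0 * 0) (at 0)"
    by (intro DERIV_mult DERIV_ident holomorphic_derivI[of _ UNIV]) auto
  moreover have "h 0 = 1" by (simp add: h_def sigma_factor_def)
  moreover have "sigma_partial w1 w2 N = (\<lambda>u. u * h u)"
    by (simp add: fun_eq_iff sigma_partial_def h_def)
  ultimately show ?thesis by (simp add: DERIV_imp_deriv)
qed

lemma deriv_sigma_0: "deriv \<sigma> 0 = 1"
  using higher_deriv_sigma_partial_tendsto[of 1 0] by (simp add: deriv_sigma_partial_0 LIMSEQ_const_iff)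

end

section \<open>Quasi-periodicity of \<open>\<sigma>\<close>\<close>

lemma has_field_derivative_inverse_power_shift:
  fixes w z :: complex
  assumes "z \<noteq> w"
  shows "((\<lambda>u. 1 / (u - w) ^ n) has_field_derivative - of_nat n / (z - w) ^ Suc n) (at z)"
proof (cases n)
  case (Suc m)
  define a where "a = z - w"
  have a: "a \<noteq> 0" using assms by (simp add: a_def)
  have "((\<lambda>u. (u - w) ^ Suc m) has_field_derivative (1 + of_nat m) * (1 * a ^ m)) (at z)"
    unfolding a_def by (intro DERIV_power_Suc derivative_eq_intros) auto
  from DERIV_inverse_fun[OF this]
  have "((\<lambda>u. inverse ((u - w) ^ Suc m)) has_field_derivative
          - (inverse (a ^ Suc m) * ((1 + of_nat m) * (1 * a ^ m)) * inverse (a ^ Suc m))) (at z)"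
    using a by (simp add: a_def mult_ac)
  also have "- (inverse (a ^ Suc m) * ((1 + of_nat m) * (1 * a ^ m)) * inverse (a ^ Suc m))
             = - of_nat n / a ^ Suc n"
    using a by (simp add: Suc field_simps)
  finally show ?thesis by (simp add: a_def divide_inverse Suc)
qed simp

lemma norm_sum_diff_le_sum_symdiff:
  fixes f :: "'a \<Rightarrow> 'b :: real_normed_vector"
  assumes "finite A" "finite B"
  shows "norm (sum f B - sum f A) \<le> (\<Sum>q\<in>(B - A) \<union> (A - B). norm (f q))"
proof -
  have "sum f B - sum f A = sum f (B - A) - sum f (A - B)"
    using sum.Int_Diff[OF assms(2), of f A] sum.Int_Diff[OF assms(1), of f B] by (simp add: Int_commute)
  hence "norm (sum f B - sum f A) \<le> norm (sum f (B - A)) + norm (sum f (A - B))"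
    by (simp add: norm_triangle_ineq4)
  also have "\<dots> \<le> (\<Sum>q\<in>B - A. norm (f q)) + (\<Sum>q\<in>A - B. norm (f q))"
    by (intro add_mono norm_sum)
  also have "\<dots> = (\<Sum>q\<in>(B - A) \<union> (A - B). norm (f q))"
    using assms by (intro sum.union_disjoint[symmetric]) auto
  finally show ?thesis .
qed

lemma shifted_index_square_symdiff:
  assumes e: "sup_norm e \<le> 1" and N: "N \<ge> 1"
  defines "B \<equiv> (\<lambda>p. p - e) ` index_square N"
  shows "(B - index_square N) \<union> (index_square N - B) \<subseteq> index_square (Suc N) - index_square (N - 1)"
proof -
  have "q \<in> index_square (Suc N)" if "q \<in> B" for q
  proof -
    obtain p where "p \<in> index_square N" "q = p - e" using \<open>q \<in> B\<close> by (auto simp: B_def)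
    thus ?thesis using sup_norm_diff_le[of p e] e by (simp add: mem_index_square)
  qed
  moreover have "q \<in> B" if "q \<in> index_square (N - 1)" for q
  proof -
    have "q + e \<in> index_square N"
      using that sup_norm_add_le[of q e] e N by (simp add: mem_index_square)
    thus ?thesis unfolding B_def by (rule rev_image_eqI) simp
  qed
  moreover have "index_square (N - 1) \<subseteq> index_square N" "index_square N \<subseteq> index_square (Suc N)"
    by (simp_all add: index_square_mono)
  ultimately show ?thesis by blast
qed

lemma card_index_square_annulus:
  assumes "N \<ge> 1"
  shows "real (card (index_square (Suc N) - index_square (N - 1))) \<le> 25 * real N ^ 2"
proof -
  have "card (index_square (Suc N) - index_square (N - 1)) \<le> card (index_square (Suc N))"
    by (rule card_mono) auto
  also have "\<dots> = (2 * Suc N + 1)^2" by (rule card_index_square)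
  finally have "real (card (index_square (Suc N) - index_square (N - 1))) \<le> real ((2 * Suc N + 1)^2)"
    by (simp only: of_nat_le_iff)
  also have "\<dots> = (2 * real N + 3)^2" by simp
  also have "\<dots> \<le> (5 * real N)^2" using assms by (intro power_mono) auto
  finally show ?thesis by (simp add: power_mult_distrib)
qed

context period_lattice
begin

lemma zeta_fun_eq: "\<zeta> = (\<lambda>u. deriv \<sigma> u / \<sigma> u)"
  by (simp add: fun_eq_iff wzeta_def)

text \<open>In classical notation \<open>dzeta = \<zeta>' = -\<wp>\<close> and \<open>ddzeta = \<zeta>'' = -\<wp>'\<close>.\<close>
definition dzeta :: "complex \<Rightarrow> complex" where
  "dzeta u = (deriv ^^ 2) \<sigma> u / \<sigma> u - \<zeta> u ^ 2"

definition ddzeta :: "complex \<Rightarrow> complex" where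
  "ddzeta u = (deriv ^^ 3) \<sigma> u / \<sigma> u - \<zeta> u ^ 3 - 3 * \<zeta> u * dzeta u"

lemma zeta_has_derivative:
  assumes "u \<notin> \<Lambda>"
  shows "(\<zeta> has_field_derivative dzeta u) (at u)"
proof -
  have s0: "\<sigma> u \<noteq> 0" using assms by (rule sigma_nonzero)
  have "((\<lambda>u. deriv \<sigma> u / \<sigma> u) has_field_derivative
         ((deriv ^^ 2) \<sigma> u * \<sigma> u - deriv \<sigma> u * deriv \<sigma> u) / (\<sigma> u * \<sigma> u)) (at u)"
    using DERIV_divide[OF higher_deriv_sigma_has_derivative[of 1] sigma_has_derivative s0]
    by (simp add: numeral_2_eq_2)
  moreover have "((deriv ^^ 2) \<sigma> u * \<sigma> u - deriv \<sigma> u * deriv \<sigma> u) / (\<sigma> u * \<sigma> u) = dzeta u"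
    using s0 by (simp add: dzeta_def wzeta_def field_simps power2_eq_square)
  ultimately show ?thesis by (simp add: zeta_fun_eq)
qed

lemma zeta_minus: "\<zeta> (- u) = - \<zeta> u"
  using higher_deriv_sigma_minus[of 1 u] by (simp add: wzeta_def sigma_minus)

lemma dzeta_minus: "dzeta (- u) = dzeta u"
  using higher_deriv_sigma_minus[of 2 u] by (simp add: dzeta_def zeta_minus sigma_minus)

definition zeta_partial :: "nat \<Rightarrow> complex \<Rightarrow> complex" where
  "zeta_partial N u = (\<Sum>p\<in>index_square N. 1 / (u - lattice_point w1 w2 p))
     + (\<Sum>p\<in>index_square N - {(0, 0)}. 1 / lattice_point w1 w2 p + u / lattice_point w1 w2 p ^ 2)"

definition dzeta_partial :: "nat \<Rightarrow> complex \<Rightarrow> complex" where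
  "dzeta_partial N u = (\<Sum>p\<in>index_square N. - (1 / (u - lattice_point w1 w2 p) ^ 2))
     + (\<Sum>p\<in>index_square N - {(0, 0)}. 1 / lattice_point w1 w2 p ^ 2)"

definition ddzeta_partial :: "nat \<Rightarrow> complex \<Rightarrow> complex" where
  "ddzeta_partial N u = (\<Sum>p\<in>index_square N. 2 / (u - lattice_point w1 w2 p) ^ 3)"

lemma zeta_partial_has_derivative:
  assumes "u \<notin> lattice_point w1 w2 ` index_square N"
  shows "(zeta_partial N has_field_derivative dzeta_partial N u) (at u)"
proof -
  have "((\<lambda>u. 1 / lattice_point w1 w2 p + u / lattice_point w1 w2 p ^ 2)
          has_field_derivative 0 + 1 / lattice_point w1 w2 p ^ 2) (at u)" for p
    by (intro DERIV_add DERIV_const DERIV_cdivide DERIV_ident)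
  moreover have "((\<lambda>u. 1 / (u - w)) has_field_derivative - (1 / (u - w) ^ 2)) (at u)" if "u \<noteq> w" for w
    using has_field_derivative_inverse_power_shift[of u w 1] that by (simp add: power2_eq_square)
  ultimately show ?thesis
    unfolding zeta_partial_def[abs_def] dzeta_partial_def using assms
    by (intro DERIV_add DERIV_sum) (auto simp: image_iff)
qed

lemma dzeta_partial_has_derivative:
  assumes "u \<notin> lattice_point w1 w2 ` index_square N"
  shows "(dzeta_partial N has_field_derivative ddzeta_partial N u) (at u)"
proof -
  have "(dzeta_partial N has_field_derivative
          (\<Sum>p\<in>index_square N. - (- of_nat 2 / (u - lattice_point w1 w2 p) ^ 3))
          + (\<Sum>p\<in>index_square N - {(0, 0)}. 0)) (at u)"
    unfolding dzeta_partial_def[abs_def]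
    using has_field_derivative_inverse_power_shift[of u _ 2] assms
    by (intro DERIV_add DERIV_sum DERIV_minus DERIV_const) (auto simp: image_iff numeral_3_eq_3)
  thus ?thesis by (simp add: ddzeta_partial_def)
qed

lemma sigma_factor_has_log_derivative:
  assumes "w = lattice_point w1 w2 p" "w \<noteq> 0" "u \<noteq> w"
  shows "((\<lambda>u. sigma_factor w1 w2 u p) has_field_derivative
           sigma_factor w1 w2 u p * (1 / (u - w) + 1 / w + u / w ^ 2)) (at u)"
  unfolding sigma_factor_explicit[OF assms(1)] using assms(2,3)
  by (auto intro!: derivative_eq_intros simp: power2_eq_square field_simps)

lemma sigma_partial_has_derivative:
  assumes u: "u \<notin> lattice_point w1 w2 ` index_square N"
  shows "(sigma_partial w1 w2 N has_field_derivative sigma_partial w1 w2 N u * zeta_partial N u) (at u)"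
proof -
  define S where "S = index_square N - {(0, 0)}"
  define h where "h = (\<lambda>u. \<Prod>p\<in>S. sigma_factor w1 w2 u p)"
  define T where "T = (\<Sum>p\<in>S. 1 / (u - lattice_point w1 w2 p) + 1 / lattice_point w1 w2 p
                                 + u / lattice_point w1 w2 p ^ 2)"
  have zero_in: "(0, 0) \<in> index_square N" by (simp add: mem_index_square sup_norm_def)
  hence u0: "u \<noteq> 0" using u by force
  have nonzero: "lattice_point w1 w2 p \<noteq> 0" "u \<noteq> lattice_point w1 w2 p" if "p \<in> S" for p
    using that u by (auto simp: S_def lattice_point_eq_0_iff)
  have "(h has_field_derivative h u * (\<Sum>p\<in>S. sigma_factor w1 w2 u p *
          (1 / (u - lattice_point w1 w2 p) + 1 / lattice_point w1 w2 p + u / lattice_point w1 w2 p ^ 2)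
          / sigma_factor w1 w2 u p)) (at u)"
    unfolding h_def using nonzero
    by (intro has_field_derivative_prod'[where f = "\<lambda>p u. sigma_factor w1 w2 u p"]
        sigma_factor_has_log_derivative) (auto simp: S_def sigma_factor_def)
  also have "(\<Sum>p\<in>S. sigma_factor w1 w2 u p *
          (1 / (u - lattice_point w1 w2 p) + 1 / lattice_point w1 w2 p + u / lattice_point w1 w2 p ^ 2)
          / sigma_factor w1 w2 u p) = T"
    unfolding T_def using nonzero by (intro sum.cong refl) (auto simp: sigma_factor_def)
  finally have h: "(h has_field_derivative h u * T) (at u)" .
  have "zeta_partial N u = 1 / u + T"
    using zero_in by (simp add: zeta_partial_def T_def S_def sum.remove sum.distrib add.assoc)
  hence "1 * h u + h u * T * u = u * h u * zeta_partial N u"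
    using u0 by (simp add: distrib_left mult_ac)
  moreover have "sigma_partial w1 w2 N = (\<lambda>u. u * h u)"
    by (simp add: fun_eq_iff sigma_partial_def h_def S_def)
  ultimately show ?thesis
    using DERIV_mult[OF DERIV_ident h] by (simp only:)
qed

lemma sigma_partial_nonzero: "u \<notin> \<Lambda> \<Longrightarrow> sigma_partial w1 w2 N u \<noteq> 0"
  by (auto simp: sigma_partial_def sigma_factor_def lattice_eq_range lattice_point_eq_0_iff)

lemma higher_derivs_sigma_partial:
  assumes u: "u \<notin> lattice_point w1 w2 ` index_square N"
  defines "P \<equiv> sigma_partial w1 w2 N"
  shows "deriv P u = P u * zeta_partial N u"
    and "(deriv ^^ 2) P u = P u * (zeta_partial N u ^ 2 + dzeta_partial N u)"
    and "(deriv ^^ 3) P u = P u * (zeta_partial N u ^ 3 + 3 * zeta_partial N u * dzeta_partial N u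
                                    + ddzeta_partial N u)"
proof -
  define U where "U = - (lattice_point w1 w2 ` index_square N)"
  have "open U" unfolding U_def by (intro open_Compl finite_imp_closed) auto
  hence near: "eventually (\<lambda>w. w \<in> U) (nhds v)" if "v \<in> U" for v
    using that by (rule eventually_nhds_in_open)
  have D1: "deriv P v = P v * zeta_partial N v" if "v \<in> U" for v
    using sigma_partial_has_derivative that unfolding U_def P_def by (auto intro: DERIV_imp_deriv)
  have D2: "deriv (deriv P) v = P v * (zeta_partial N v ^ 2 + dzeta_partial N v)" if v: "v \<in> U" for v
  proof -
    have "deriv (deriv P) v = deriv (\<lambda>v. P v * zeta_partial N v) v"
      by (rule deriv_cong_ev[OF eventually_mono[OF near[OF v]]]) (auto simp: D1)
    also have "\<dots> = P v * zeta_partial N v * zeta_partial N v + dzeta_partial N v * P v"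
      using v unfolding U_def P_def
      by (intro DERIV_imp_deriv DERIV_mult sigma_partial_has_derivative zeta_partial_has_derivative) auto
    finally show ?thesis by (simp add: algebra_simps power2_eq_square)
  qed
  have uO: "u \<in> U" using u by (simp add: U_def)
  have "deriv (deriv (deriv P)) u = deriv (\<lambda>v. P v * (zeta_partial N v ^ 2 + dzeta_partial N v)) u"
    by (rule deriv_cong_ev[OF eventually_mono[OF near[OF uO]]]) (auto simp: D2)
  also have "\<dots> = P u * zeta_partial N u * (zeta_partial N u ^ 2 + dzeta_partial N u)
      + (of_nat 2 * (dzeta_partial N u * zeta_partial N u ^ (2 - Suc 0)) + ddzeta_partial N u) * P u"
    using u unfolding P_def
    by (intro DERIV_imp_deriv DERIV_mult DERIV_add DERIV_power sigma_partial_has_derivative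
        zeta_partial_has_derivative dzeta_partial_has_derivative) auto
  finally show "(deriv ^^ 3) P u = P u * (zeta_partial N u ^ 3
      + 3 * zeta_partial N u * dzeta_partial N u + ddzeta_partial N u)"
    by (simp add: numeral_3_eq_3 algebra_simps power2_eq_square power3_eq_cube)
  show "deriv P u = P u * zeta_partial N u" by (rule D1[OF uO])
  show "(deriv ^^ 2) P u = P u * (zeta_partial N u ^ 2 + dzeta_partial N u)"
    by (simp add: numeral_2_eq_2 D2[OF uO])
qed

lemma ddzeta_partial_tendsto:
  assumes u: "u \<notin> \<Lambda>"
  shows "(\<lambda>N. ddzeta_partial N u) \<longlonglongrightarrow> ddzeta u"
proof -
  define y where "y = (\<lambda>k N. (deriv ^^ k) (sigma_partial w1 w2 N) u)"
  define s where "s = (\<lambda>k. (deriv ^^ k) \<sigma> u)"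
  define L where "L = (\<lambda>y :: nat \<Rightarrow> complex. y 3 / y 0 - (y 1 / y 0)^3
                          - 3 * (y 1 / y 0) * (y 2 / y 0 - (y 1 / y 0)^2))"
  have "(\<lambda>N. y k N) \<longlonglongrightarrow> s k" for k
    unfolding y_def s_def by (rule higher_deriv_sigma_partial_tendsto)
  moreover have "s 0 \<noteq> 0" using u by (simp add: s_def sigma_nonzero)
  ultimately have "(\<lambda>N. L (\<lambda>k. y k N)) \<longlonglongrightarrow> L s"
    unfolding L_def by (intro tendsto_intros) auto
  moreover have "L s = ddzeta u"
    by (simp add: L_def s_def ddzeta_def dzeta_def wzeta_def)
  moreover have "L (\<lambda>k. y k N) = ddzeta_partial N u" for N
  proof -
    have "u \<notin> lattice_point w1 w2 ` index_square N" using u by (auto simp: lattice_eq_range)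
    thus ?thesis
      using higher_derivs_sigma_partial[of u N] sigma_partial_nonzero[OF u, of N]
      by (simp add: L_def y_def field_simps)
  qed
  ultimately show ?thesis by simp
qed


lemma dzeta_has_derivative:
  assumes "u \<notin> \<Lambda>"
  shows "(dzeta has_field_derivative ddzeta u) (at u)"
proof -
  have s0: "\<sigma> u \<noteq> 0" using assms by (rule sigma_nonzero)
  have "dzeta = (\<lambda>u. (deriv ^^ 2) \<sigma> u / \<sigma> u - \<zeta> u ^ 2)"
    by (simp add: fun_eq_iff dzeta_def)
  moreover have "((\<lambda>u. (deriv ^^ 2) \<sigma> u / \<sigma> u - \<zeta> u ^ 2) has_field_derivative
      ((deriv ^^ 3) \<sigma> u * \<sigma> u - (deriv ^^ 2) \<sigma> u * deriv \<sigma> u) / (\<sigma> u * \<sigma> u)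
        - of_nat 2 * (dzeta u * \<zeta> u ^ (2 - Suc 0))) (at u)"
    using higher_deriv_sigma_has_derivative[of 2 u]
    by (intro DERIV_diff DERIV_divide DERIV_power[OF zeta_has_derivative[OF assms]] sigma_has_derivative s0)
       (simp add: numeral_3_eq_3)
  moreover have "((deriv ^^ 3) \<sigma> u * \<sigma> u - (deriv ^^ 2) \<sigma> u * deriv \<sigma> u) / (\<sigma> u * \<sigma> u)
        - of_nat 2 * (dzeta u * \<zeta> u ^ (2 - Suc 0)) = ddzeta u"
    using s0 by (simp add: ddzeta_def dzeta_def wzeta_def field_simps power2_eq_square power3_eq_cube)
  ultimately show ?thesis by simp
qed

lemma norm_inverse_cube_le:
  assumes q: "q \<notin> index_square (N - 1)" and N: "N \<ge> 1" "\<kappa> * real N \<ge> 2 * norm u"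
  shows "norm (2 / (u - lattice_point w1 w2 q) ^ 3) \<le> 16 / (\<kappa>^3 * real N ^ 3)"
proof -
  have "\<kappa> * real N \<le> norm (lattice_point w1 w2 q)"
    using norm_lattice_point_ge_if_not_in_index_square[OF q] N by simp
  moreover have "norm (lattice_point w1 w2 q) - norm u \<le> norm (u - lattice_point w1 w2 q)"
    using norm_triangle_ineq2[of "lattice_point w1 w2 q" u] by (simp add: norm_minus_commute)
  ultimately have d: "norm (u - lattice_point w1 w2 q) \<ge> \<kappa> * real N / 2"
    using N(2) by linarith
  have pos: "\<kappa> * real N / 2 > 0" using kappa_pos N by simp
  have "norm (2 / (u - lattice_point w1 w2 q) ^ 3) = 2 / norm (u - lattice_point w1 w2 q) ^ 3"
    by (simp add: norm_divide norm_power)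
  also have "\<dots> \<le> 2 / (\<kappa> * real N / 2) ^ 3"
    using d pos by (intro divide_left_mono power_mono mult_pos_pos zero_less_power) auto
  also have "\<dots> = 16 / (\<kappa>^3 * real N ^ 3)"
    by (simp add: power_divide power_mult_distrib)
  finally show ?thesis .
qed

text \<open>Shifting the summation square by one step changes \<open>ddzeta_partial\<close> only on an annulus of
  \<open>O(N\<^sup>2)\<close> lattice points, each contributing \<open>O(N\<^sup>-\<^sup>3)\<close>.\<close>
lemma norm_ddzeta_partial_shift_le:
  assumes e: "sup_norm e \<le> 1" and N: "N \<ge> 1" "\<kappa> * real N \<ge> 2 * norm u"
  shows "norm (ddzeta_partial N (u + lattice_point w1 w2 e) - ddzeta_partial N u) \<le> 400 / (\<kappa>^3 * real N)"
proof -
  define f where "f = (\<lambda>q. 2 / (u - lattice_point w1 w2 q) ^ 3)"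
  define B where "B = (\<lambda>p. p - e) ` index_square N"
  define K where "K = index_square (Suc N) - index_square (N - 1)"
  have "ddzeta_partial N (u + lattice_point w1 w2 e) = (\<Sum>p\<in>index_square N. f (p - e))"
    unfolding ddzeta_partial_def f_def
    by (intro sum.cong refl) (simp add: lattice_point_diff algebra_simps)
  also have "\<dots> = sum f B"
    unfolding B_def by (subst sum.reindex) (auto simp: inj_on_def)
  finally have "norm (ddzeta_partial N (u + lattice_point w1 w2 e) - ddzeta_partial N u)
      \<le> (\<Sum>q\<in>(B - index_square N) \<union> (index_square N - B). norm (f q))"
    using norm_sum_diff_le_sum_symdiff[of "index_square N" B f]
    by (simp add: B_def ddzeta_partial_def f_def)
  also have "\<dots> \<le> (\<Sum>q\<in>K. norm (f q))"
    unfolding K_def B_def using shifted_index_square_symdiff[OF e N(1)] by (intro sum_mono2) auto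
  also have "\<dots> \<le> (\<Sum>q\<in>K. 16 / (\<kappa>^3 * real N ^ 3))"
    unfolding f_def using N by (intro sum_mono norm_inverse_cube_le) (auto simp: K_def)
  also have "\<dots> \<le> 25 * real N ^ 2 * (16 / (\<kappa>^3 * real N ^ 3))"
    unfolding sum_constant K_def using card_index_square_annulus[OF N(1)] kappa_pos
    by (intro mult_right_mono) auto
  also have "\<dots> = 400 / (\<kappa>^3 * real N)"
    using N kappa_pos by (simp add: field_simps power2_eq_square power3_eq_cube)
  finally show ?thesis .
qed

lemma ddzeta_shift_unit:
  assumes u: "u \<notin> \<Lambda>" and e: "sup_norm e \<le> 1"
  shows "ddzeta (u + lattice_point w1 w2 e) = ddzeta u"
proof -
  have "u + lattice_point w1 w2 e \<notin> \<Lambda>" using u by (simp add: add_lattice_iff)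
  hence "(\<lambda>N. ddzeta_partial N (u + lattice_point w1 w2 e) - ddzeta_partial N u)
           \<longlonglongrightarrow> ddzeta (u + lattice_point w1 w2 e) - ddzeta u"
    by (intro tendsto_diff ddzeta_partial_tendsto u)
  moreover have "(\<lambda>N. ddzeta_partial N (u + lattice_point w1 w2 e) - ddzeta_partial N u) \<longlonglongrightarrow> 0"
  proof (rule Lim_null_comparison)
    have "filterlim (\<lambda>N. \<kappa> * real N) at_top sequentially"
      using kappa_pos by (intro filterlim_tendsto_pos_mult_at_top[OF tendsto_const] filterlim_real_sequentially) auto
    hence "eventually (\<lambda>N. \<kappa> * real N \<ge> 2 * norm u) sequentially"
      by (simp add: filterlim_at_top)
    with eventually_ge_at_top[of 1]
    show "eventually (\<lambda>N. norm (ddzeta_partial N (u + lattice_point w1 w2 e) - ddzeta_partial N u)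
                            \<le> 400 / (\<kappa>^3 * real N)) sequentially"
      by eventually_elim (rule norm_ddzeta_partial_shift_le[OF e])
    show "(\<lambda>N. 400 / (\<kappa>^3 * real N)) \<longlonglongrightarrow> 0"
      using kappa_pos
      by (intro tendsto_divide_0[OF tendsto_const] filterlim_at_top_imp_at_infinity
          filterlim_tendsto_pos_mult_at_top[OF tendsto_const] filterlim_real_sequentially) auto
  qed
  ultimately show ?thesis using LIMSEQ_unique by fastforce
qed

lemma of_int_mult_in_lattice:
  assumes "l \<in> \<Lambda>"
  shows "of_int m * l \<in> \<Lambda>"
proof -
  obtain a b where "l = lattice_point w1 w2 (a, b)" using assms by (auto simp: lattice_eq_range)
  hence "of_int m * l = lattice_point w1 w2 (m * a, m * b)"
    by (simp add: lattice_point_def algebra_simps)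
  thus ?thesis by simp
qed

lemma periodic_of_int_mult:
  assumes l: "l \<in> \<Lambda>" and f: "\<And>u. u \<notin> \<Lambda> \<Longrightarrow> f (u + l) = f u" and u: "u \<notin> \<Lambda>"
  shows "f (u + of_int m * l) = f u"
proof -
  have nat: "f (v + of_nat n * l) = f v" if "v \<notin> \<Lambda>" for v n
  proof (induction n)
    case (Suc n)
    have "v + of_nat n * l \<notin> \<Lambda>"
      using that of_int_mult_in_lattice[OF l, of "int n"] by (simp add: add_lattice_iff)
    thus ?case using f[of "v + of_nat n * l"] Suc by (simp add: algebra_simps)
  qed simp
  show ?thesis
  proof (cases m rule: int_cases)
    case (nonneg n)
    thus ?thesis using nat[OF u] by simp
  next
    case (neg n)
    have "- (of_nat (Suc n) * l) \<in> \<Lambda>"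
      using of_int_mult_in_lattice[OF l, of "- int (Suc n)"] by (simp add: algebra_simps)
    hence "u - of_nat (Suc n) * l \<notin> \<Lambda>"
      using add_lattice_iff[of "- (of_nat (Suc n) * l)" u] u by simp
    from nat[OF this, of "Suc n"] show ?thesis by (simp add: neg algebra_simps)
  qed
qed

lemma periodic_if_periodic_generators:
  assumes "\<And>u. u \<notin> \<Lambda> \<Longrightarrow> f (u + lattice_point w1 w2 (1, 0)) = f u"
      and "\<And>u. u \<notin> \<Lambda> \<Longrightarrow> f (u + lattice_point w1 w2 (0, 1)) = f u"
      and l: "l \<in> \<Lambda>" and u: "u \<notin> \<Lambda>"
  shows "f (u + l) = f u"
proof -
  define l1 where "l1 = lattice_point w1 w2 (1, 0)"
  define l2 where "l2 = lattice_point w1 w2 (0, 1)"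
  obtain m k where "l = lattice_point w1 w2 (m, k)" using l by (auto simp: lattice_eq_range)
  hence "l = of_int m * l1 + of_int k * l2"
    by (simp add: lattice_point_def l1_def l2_def algebra_simps)
  moreover have "u + of_int m * l1 \<notin> \<Lambda>"
    using u of_int_mult_in_lattice[of l1 m] by (simp add: add_lattice_iff l1_def)
  ultimately show ?thesis
    using periodic_of_int_mult[of l1 f u m] periodic_of_int_mult[of l2 f "u + of_int m * l1" k]
      assms(1,2) u by (simp add: l1_def l2_def add.assoc)
qed

lemma ddzeta_periodic: "l \<in> \<Lambda> \<Longrightarrow> u \<notin> \<Lambda> \<Longrightarrow> ddzeta (u + l) = ddzeta u"
  by (rule periodic_if_periodic_generators) (auto intro: ddzeta_shift_unit simp: sup_norm_def)

text \<open>\<open>dzeta\<close> is even, so the constant \<open>dzeta (u + l) - dzeta u\<close> equals its own negative.\<close>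
lemma dzeta_periodic:
  assumes l: "l \<in> \<Lambda>" and u: "u \<notin> \<Lambda>"
  shows "dzeta (u + l) = dzeta u"
proof -
  have "((\<lambda>z. dzeta (z + l) - dzeta z) has_field_derivative ddzeta (z + l) - ddzeta z) (at z)"
    if "z \<notin> \<Lambda>" for z
    using dzeta_has_derivative[of "z + l"] dzeta_has_derivative[OF that] that l
    by (intro DERIV_diff) (auto simp: add_lattice_iff DERIV_shift)
  hence "((\<lambda>z. dzeta (z + l) - dzeta z) has_field_derivative 0) (at z)" if "z \<notin> \<Lambda>" for z
    using that l by (simp add: ddzeta_periodic)
  then obtain C where C: "\<And>z. z \<notin> \<Lambda> \<Longrightarrow> dzeta (z + l) - dzeta z = C"
    by (rule constant_on_lattice_complement) blast+
  have "- u \<notin> \<Lambda>" using u lattice_uminus[of "- u"] by auto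
  hence "- u - l \<notin> \<Lambda>" using add_lattice_iff[OF lattice_uminus[OF l], of "- u"] by simp
  moreover have "- u - l + l = - u" "- u - l = - (u + l)" by simp_all
  ultimately have "C = dzeta (- u) - dzeta (- (u + l))"
    using C[of "- u - l"] by metis
  also have "\<dots> = dzeta u - dzeta (u + l)"
    by (simp only: dzeta_minus)
  also have "\<dots> = - C"
    using C[OF u] by (simp add: algebra_simps)
  finally have "C = 0" by simp
  with C[OF u] show ?thesis by simp
qed

lemma zeta_quasi_periodic:
  assumes l: "l \<in> \<Lambda>"
  obtains a where "\<And>u. u \<notin> \<Lambda> \<Longrightarrow> \<zeta> (u + l) = \<zeta> u + a"
proof -
  have "((\<lambda>z. \<zeta> (z + l) - \<zeta> z) has_field_derivative dzeta (z + l) - dzeta z) (at z)"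
    if "z \<notin> \<Lambda>" for z
    using zeta_has_derivative[of "z + l"] zeta_has_derivative[OF that] that l
    by (intro DERIV_diff) (auto simp: add_lattice_iff DERIV_shift)
  hence "((\<lambda>z. \<zeta> (z + l) - \<zeta> z) has_field_derivative 0) (at z)" if "z \<notin> \<Lambda>" for z
    using that l by (simp add: dzeta_periodic)
  then obtain a where "\<And>z. z \<notin> \<Lambda> \<Longrightarrow> \<zeta> (z + l) - \<zeta> z = a"
    by (rule constant_on_lattice_complement) blast+
  thus ?thesis using that by (simp add: algebra_simps)
qed

lemma sigma_shift_ratio_has_derivative:
  assumes l: "l \<in> \<Lambda>" and a: "\<And>u. u \<notin> \<Lambda> \<Longrightarrow> \<zeta> (u + l) = \<zeta> u + a" and z: "z \<notin> \<Lambda>"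
  shows "((\<lambda>z. \<sigma> (z + l) * exp (- a * z) / \<sigma> z) has_field_derivative 0) (at z)"
proof -
  have s0: "\<sigma> z \<noteq> 0" "\<sigma> (z + l) \<noteq> 0"
    using z l by (simp_all add: sigma_nonzero add_lattice_iff)
  have "((\<lambda>z. \<sigma> (z + l) * exp (- a * z) / \<sigma> z) has_field_derivative
         ((deriv \<sigma> (z + l) * exp (- a * z) + \<sigma> (z + l) * (exp (- a * z) * (- a))) * \<sigma> z
            - \<sigma> (z + l) * exp (- a * z) * deriv \<sigma> z) / (\<sigma> z * \<sigma> z)) (at z)"
    using sigma_has_derivative[of "z + l"] s0
    by (intro DERIV_divide DERIV_mult sigma_has_derivative)
       (auto intro!: derivative_eq_intros simp: DERIV_shift)
  moreover have "deriv \<sigma> (z + l) = (\<zeta> z + a) * \<sigma> (z + l)" "deriv \<sigma> z = \<zeta> z * \<sigma> z"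
    using a[OF z] s0 by (simp_all add: wzeta_def field_simps)
  ultimately show ?thesis by (simp add: algebra_simps)
qed

lemma sigma_quasi_periodic:
  assumes l: "l \<in> \<Lambda>"
  obtains C a where "C \<noteq> 0" "\<And>u. \<sigma> (u + l) = C * exp (a * u) * \<sigma> u"
proof -
  obtain a where a: "\<And>u. u \<notin> \<Lambda> \<Longrightarrow> \<zeta> (u + l) = \<zeta> u + a"
    using zeta_quasi_periodic[OF l] by blast
  define g where "g = (\<lambda>z. \<sigma> (z + l) * exp (- a * z) / \<sigma> z)"
  have "(g has_field_derivative 0) (at z)" if "z \<notin> \<Lambda>" for z
    unfolding g_def using l a that by (rule sigma_shift_ratio_has_derivative)
  then obtain C where C: "\<And>z. z \<notin> \<Lambda> \<Longrightarrow> g z = C"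
    by (rule constant_on_lattice_complement) blast+
  have eq: "\<sigma> (u + l) = C * exp (a * u) * \<sigma> u" for u
  proof (cases "u \<in> \<Lambda>")
    case True
    hence "\<sigma> u = 0" "\<sigma> (u + l) = 0" using l by (simp_all add: sigma_eq_0_iff lattice_add)
    thus ?thesis by simp
  next
    case False
    hence "\<sigma> (u + l) * exp (- a * u) = C * \<sigma> u"
      using C[OF False] sigma_nonzero[OF False] by (simp add: g_def field_simps)
    thus ?thesis by (simp add: exp_minus field_simps)
  qed
  obtain u0 where u0: "u0 \<notin> \<Lambda>" using lattice_ne_UNIV by blast
  have "C \<noteq> 0"
    using eq[of u0] u0 l by (auto simp: sigma_eq_0_iff add_lattice_iff)
  with eq show ?thesis using that by blast
qed

lemma deriv_sigma_shift:
  assumes "\<And>u. \<sigma> (u + l) = C * exp (a * u) * \<sigma> u"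
  shows "deriv \<sigma> (u + l) = C * exp (a * u) * (a * \<sigma> u + deriv \<sigma> u)"
proof -
  have "((\<lambda>u. \<sigma> (u + l)) has_field_derivative deriv \<sigma> (u + l)) (at u)"
    using sigma_has_derivative[of "u + l"] by (simp add: DERIV_shift)
  moreover have "((\<lambda>u. \<sigma> (u + l)) has_field_derivative C * exp (a * u) * (a * \<sigma> u + deriv \<sigma> u)) (at u)"
    unfolding assms by (auto intro!: derivative_eq_intros simp: algebra_simps)
  ultimately show ?thesis using DERIV_unique by blast
qed

lemma zeta_shift:
  assumes "\<And>u. \<sigma> (u + l) = C * exp (a * u) * \<sigma> u" "C \<noteq> 0" "u \<notin> \<Lambda>"
  shows "\<zeta> (u + l) = \<zeta> u + a"
  using deriv_sigma_shift[OF assms(1), of u] assms(1)[of u] sigma_nonzero[OF assms(3)] assms(2)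
  by (simp add: wzeta_def field_simps)


section \<open>The addition formula\<close>

lemma real_coordinates:
  obtains s t :: real
  where "z = of_real s * lattice_point w1 w2 (1, 0) + of_real t * lattice_point w1 w2 (0, 1)"
proof -
  define \<tau> where "\<tau> = w2 / w1"
  have Im_\<tau>: "Im \<tau> \<noteq> 0" using Im_ratio_pos by (simp add: \<tau>_def)
  define t where "t = Im (z / (2 * w1)) / Im \<tau>"
  define s where "s = Re (z / (2 * w1)) - t * Re \<tau>"
  have "z / (2 * w1) = of_real s + of_real t * \<tau>"
    using Im_\<tau> by (intro complex_eqI) (simp_all add: s_def t_def)
  hence "z = of_real s * (2 * w1) + of_real t * (2 * w2)"
    using w1_nonzero by (simp add: \<tau>_def field_simps)
  thus thesis by (intro that) (simp add: lattice_point_def)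
qed

lemma bounded_range_if_periodic:
  assumes g: "continuous_on UNIV g" and periodic: "\<And>z l. l \<in> \<Lambda> \<Longrightarrow> g (z + l) = g z"
  shows "bounded (range g)"
proof -
  define P where "P = (\<lambda>(s, t). complex_of_real s * lattice_point w1 w2 (1, 0)
                                + complex_of_real t * lattice_point w1 w2 (0, 1)) ` ({0..1} \<times> {0..1})"
  have "compact P" unfolding P_def
    by (intro compact_continuous_image compact_Times compact_Icc)
       (auto intro!: continuous_intros simp: case_prod_unfold)
  hence "bounded (g ` P)"
    using g by (intro compact_imp_bounded compact_continuous_image) (auto intro: continuous_on_subset)
  moreover have "range g \<subseteq> g ` P"
  proof safe
    fix z
    obtain s t where z: "z = of_real s * lattice_point w1 w2 (1, 0) + of_real t * lattice_point w1 w2 (0, 1)"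
      by (rule real_coordinates)
    define z' where "z' = of_real (frac s) * lattice_point w1 w2 (1, 0) + of_real (frac t) * lattice_point w1 w2 (0, 1)"
    have "z' \<in> P" unfolding P_def z'_def
      by (rule image_eqI[of _ _ "(frac s, frac t)"]) (auto simp: frac_lt_1 less_imp_le)
    moreover have "z = z' + lattice_point w1 w2 (\<lfloor>s\<rfloor>, \<lfloor>t\<rfloor>)"
      by (simp add: z z'_def frac_def lattice_point_def algebra_simps)
    ultimately show "g z \<in> g ` P" using periodic[of "lattice_point w1 w2 (\<lfloor>s\<rfloor>, \<lfloor>t\<rfloor>)" z'] by simp
  qed
  ultimately show ?thesis by (rule bounded_subset)
qed

lemma periodic_entire_constant:
  assumes "g holomorphic_on UNIV" "\<And>z l. l \<in> \<Lambda> \<Longrightarrow> g (z + l) = g z"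
  shows "g z = g 0"
  using Liouville_theorem[OF assms(1) bounded_range_if_periodic[OF holomorphic_on_imp_continuous_on[OF assms(1)] assms(2)]]
  by (auto simp: constant_on_def)

text \<open>For \<open>x\<close> off the lattice, dividing \<open>addition_defect \<alpha> \<beta> x = 0\<close> by \<open>\<sigma> (x - \<alpha>) \<sigma> (x - \<beta>)\<close> gives the
  classical addition formula \<open>\<zeta> (x - \<beta>) - \<zeta> (x - \<alpha>) + \<zeta> \<beta> - \<zeta> \<alpha> =
  \<sigma> (\<alpha> - \<beta>) \<sigma> x \<sigma> (x - \<alpha> - \<beta>) / (\<sigma> \<alpha> \<sigma> \<beta> \<sigma> (x - \<alpha>) \<sigma> (x - \<beta>))\<close>; this is the case
  \<open>n = 2\<close> of the theorem.\<close>
definition addition_defect :: "complex \<Rightarrow> complex \<Rightarrow> complex \<Rightarrow> complex" where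
  "addition_defect \<alpha> \<beta> x = \<sigma> (x - \<alpha>) * deriv \<sigma> (x - \<beta>) - deriv \<sigma> (x - \<alpha>) * \<sigma> (x - \<beta>)
     + (\<zeta> \<beta> - \<zeta> \<alpha>) * (\<sigma> (x - \<alpha>) * \<sigma> (x - \<beta>))
     - \<sigma> (\<alpha> - \<beta>) / (\<sigma> \<alpha> * \<sigma> \<beta>) * (\<sigma> x * \<sigma> (x - \<alpha> - \<beta>))"

definition addition_quotient :: "complex \<Rightarrow> complex \<Rightarrow> complex \<Rightarrow> complex" where
  "addition_quotient \<alpha> \<beta> x = addition_defect \<alpha> \<beta> x / (\<sigma> (x - \<alpha>) * \<sigma> (x - \<beta>))"

lemma addition_defect_holomorphic: "addition_defect \<alpha> \<beta> holomorphic_on A"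
  unfolding addition_defect_def by (intro holomorphic_intros)

lemma addition_defect_swap: "addition_defect \<beta> \<alpha> x = - addition_defect \<alpha> \<beta> x"
proof -
  have "\<sigma> (\<beta> - \<alpha>) = - \<sigma> (\<alpha> - \<beta>)" using sigma_minus[of "\<alpha> - \<beta>"] by simp
  moreover have "\<sigma> (x - \<beta> - \<alpha>) = \<sigma> (x - \<alpha> - \<beta>)" by (simp add: diff_diff_eq add.commute)
  ultimately show ?thesis unfolding addition_defect_def by (simp only:) (simp add: field_simps)
qed

lemma addition_quotient_swap: "addition_quotient \<beta> \<alpha> x = - addition_quotient \<alpha> \<beta> x"
  using mult.commute[of "\<sigma> (x - \<beta>)" "\<sigma> (x - \<alpha>)"]
  by (simp add: addition_quotient_def addition_defect_swap[of \<alpha> \<beta>])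

lemma addition_defect_at_first:
  assumes "\<alpha> \<notin> \<Lambda>" "\<beta> \<notin> \<Lambda>"
  shows "addition_defect \<alpha> \<beta> \<alpha> = 0"
  using sigma_minus[of \<beta>] sigma_nonzero[OF assms(1)] sigma_nonzero[OF assms(2)]
  by (simp add: addition_defect_def deriv_sigma_0 field_simps)

lemma addition_defect_at_0:
  assumes "\<alpha> \<notin> \<Lambda>" "\<beta> \<notin> \<Lambda>"
  shows "addition_defect \<alpha> \<beta> 0 = 0"
  using sigma_nonzero[OF assms(1)] sigma_nonzero[OF assms(2)]
  by (simp add: addition_defect_def sigma_minus deriv_sigma_minus wzeta_def field_simps)

lemma addition_defect_quasi_periodic:
  assumes "l \<in> \<Lambda>"
  obtains M where "\<And>x. M x \<noteq> 0"
    "\<And>x. addition_defect \<alpha> \<beta> (x + l) = M x * addition_defect \<alpha> \<beta> x"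
    "\<And>x. \<sigma> (x + l - \<alpha>) * \<sigma> (x + l - \<beta>) = M x * (\<sigma> (x - \<alpha>) * \<sigma> (x - \<beta>))"
proof -
  obtain C a where C: "C \<noteq> 0" and eq: "\<And>u. \<sigma> (u + l) = C * exp (a * u) * \<sigma> u"
    using sigma_quasi_periodic[OF assms] by blast
  define M where "M = (\<lambda>x. C * C * exp (a * (x - \<alpha>)) * exp (a * (x - \<beta>)))"
  have s: "\<sigma> (x + l - y) = C * exp (a * (x - y)) * \<sigma> (x - y)" for x y
    using eq[of "x - y"] by (simp add: algebra_simps)
  have d: "deriv \<sigma> (x + l - y) = C * exp (a * (x - y)) * (a * \<sigma> (x - y) + deriv \<sigma> (x - y))" for x y
    using deriv_sigma_shift[OF eq, of "x - y"] by (simp add: algebra_simps)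
  have P: "\<sigma> (x + l) * \<sigma> (x + l - \<alpha> - \<beta>) = M x * (\<sigma> x * \<sigma> (x - \<alpha> - \<beta>))" for x
  proof -
    have "\<sigma> (x + l - \<alpha> - \<beta>) = C * exp (a * (x - \<alpha> - \<beta>)) * \<sigma> (x - \<alpha> - \<beta>)"
      using eq[of "x - \<alpha> - \<beta>"] by (simp add: algebra_simps)
    moreover have "exp (a * x) * exp (a * (x - \<alpha> - \<beta>)) = exp (a * (x - \<alpha>)) * exp (a * (x - \<beta>))"
      by (simp add: exp_add[symmetric] algebra_simps)
    ultimately show ?thesis unfolding eq[of x] by (simp add: M_def)
  qed
  show ?thesis
  proof (rule that)
    show "M x \<noteq> 0" for x using C by (simp add: M_def)
    show "addition_defect \<alpha> \<beta> (x + l) = M x * addition_defect \<alpha> \<beta> x" for x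
      unfolding addition_defect_def P s d by (simp add: M_def algebra_simps)
    show "\<sigma> (x + l - \<alpha>) * \<sigma> (x + l - \<beta>) = M x * (\<sigma> (x - \<alpha>) * \<sigma> (x - \<beta>))" for x
      unfolding s by (simp add: M_def algebra_simps)
  qed
qed

lemma addition_quotient_periodic:
  assumes "l \<in> \<Lambda>"
  shows "addition_quotient \<alpha> \<beta> (x + l) = addition_quotient \<alpha> \<beta> x"
proof -
  obtain M where "\<And>x. M x \<noteq> 0"
    "\<And>x. addition_defect \<alpha> \<beta> (x + l) = M x * addition_defect \<alpha> \<beta> x"
    "\<And>x. \<sigma> (x + l - \<alpha>) * \<sigma> (x + l - \<beta>) = M x * (\<sigma> (x - \<alpha>) * \<sigma> (x - \<beta>))"
    using addition_defect_quasi_periodic[OF assms] by blast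
  thus ?thesis by (simp add: addition_quotient_def)
qed

lemma addition_defect_degenerate:
  assumes "\<alpha> \<notin> \<Lambda>" "\<beta> \<notin> \<Lambda>" "\<alpha> - \<beta> \<in> \<Lambda>"
  shows "addition_defect \<alpha> \<beta> x = 0"
proof -
  obtain C a where C: "C \<noteq> 0" and eq: "\<And>u. \<sigma> (u + (\<alpha> - \<beta>)) = C * exp (a * u) * \<sigma> u"
    using sigma_quasi_periodic[OF assms(3)] by blast
  have "\<zeta> \<alpha> = \<zeta> \<beta> + a" using zeta_shift[OF eq C assms(2)] by simp
  moreover have "\<sigma> (x - \<beta>) = C * exp (a * (x - \<alpha>)) * \<sigma> (x - \<alpha>)"
    using eq[of "x - \<alpha>"] by simp
  moreover have "deriv \<sigma> (x - \<beta>) = C * exp (a * (x - \<alpha>)) * (a * \<sigma> (x - \<alpha>) + deriv \<sigma> (x - \<alpha>))"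
    using deriv_sigma_shift[OF eq, of "x - \<alpha>"] by simp
  moreover have "\<sigma> (\<alpha> - \<beta>) = 0" using assms(3) by (simp add: sigma_eq_0_iff)
  ultimately show ?thesis by (simp add: addition_defect_def algebra_simps)
qed

lemma addition_quotient_tendsto_first:
  assumes "\<alpha> \<notin> \<Lambda>" "\<beta> \<notin> \<Lambda>" "\<alpha> - \<beta> \<notin> \<Lambda>"
  shows "addition_quotient \<alpha> \<beta> \<midarrow>\<alpha>\<rightarrow> deriv (addition_defect \<alpha> \<beta>) \<alpha> / \<sigma> (\<alpha> - \<beta>)"
  unfolding addition_quotient_def[abs_def]
proof (rule lhopital_complex_simple)
  show "(addition_defect \<alpha> \<beta> has_field_derivative deriv (addition_defect \<alpha> \<beta>) \<alpha>) (at \<alpha>)"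
    using addition_defect_holomorphic[of \<alpha> \<beta> UNIV] by (auto intro: holomorphic_derivI)
  show "((\<lambda>x. \<sigma> (x - \<alpha>) * \<sigma> (x - \<beta>)) has_field_derivative
          deriv \<sigma> (\<alpha> - \<alpha>) * \<sigma> (\<alpha> - \<beta>) + deriv \<sigma> (\<alpha> - \<beta>) * \<sigma> (\<alpha> - \<alpha>)) (at \<alpha>)"
    by (intro DERIV_mult sigma_diff_has_derivative)
qed (use assms in \<open>auto simp: addition_defect_at_first deriv_sigma_0 sigma_eq_0_iff\<close>)

lemma addition_quotient_isCont:
  assumes "z - \<alpha> \<notin> \<Lambda>" "z - \<beta> \<notin> \<Lambda>"
  shows "isCont (addition_quotient \<alpha> \<beta>) z"
proof -
  have "isCont (addition_defect \<alpha> \<beta>) z"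
    using holomorphic_on_imp_continuous_on[OF addition_defect_holomorphic[of \<alpha> \<beta> UNIV]]
    by (simp add: continuous_on_eq_continuous_at)
  moreover have "\<sigma> (z - \<alpha>) * \<sigma> (z - \<beta>) \<noteq> 0" using assms by (simp add: sigma_eq_0_iff)
  ultimately show ?thesis
    unfolding addition_quotient_def[abs_def] by (intro continuous_intros)
qed

lemma addition_quotient_has_limit:
  assumes "\<alpha> \<notin> \<Lambda>" "\<beta> \<notin> \<Lambda>" "\<alpha> - \<beta> \<notin> \<Lambda>"
  shows "\<exists>L. addition_quotient \<alpha> \<beta> \<midarrow>z\<rightarrow> L"
proof -
  have shift: "\<exists>L. addition_quotient \<alpha> \<beta> \<midarrow>z\<rightarrow> L"
    if "z - y \<in> \<Lambda>" "addition_quotient \<alpha> \<beta> \<midarrow>y\<rightarrow> L" for y L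
  proof -
    have "y - z \<in> \<Lambda>" using lattice_uminus[OF that(1)] by simp
    hence "(\<lambda>x. addition_quotient \<alpha> \<beta> (x + (y - z))) = addition_quotient \<alpha> \<beta>"
      by (simp add: fun_eq_iff addition_quotient_periodic)
    moreover have "(\<lambda>x. addition_quotient \<alpha> \<beta> (x + (y - z))) \<midarrow>z\<rightarrow> L"
      using LIM_offset[OF that(2), of "y - z"] by simp
    ultimately show ?thesis by auto
  qed
  have "\<beta> - \<alpha> \<notin> \<Lambda>" using assms(3) lattice_uminus[of "\<beta> - \<alpha>"] by auto
  hence "addition_quotient \<beta> \<alpha> \<midarrow>\<beta>\<rightarrow> deriv (addition_defect \<beta> \<alpha>) \<beta> / \<sigma> (\<beta> - \<alpha>)"
    by (rule addition_quotient_tendsto_first[OF assms(2,1)])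
  hence "(\<lambda>x. - addition_quotient \<beta> \<alpha> x) \<midarrow>\<beta>\<rightarrow> - (deriv (addition_defect \<beta> \<alpha>) \<beta> / \<sigma> (\<beta> - \<alpha>))"
    by (rule tendsto_minus)
  moreover have "(\<lambda>x. - addition_quotient \<beta> \<alpha> x) = addition_quotient \<alpha> \<beta>"
    using addition_quotient_swap[of \<beta> \<alpha>] by auto
  ultimately have at_second: "\<exists>L. addition_quotient \<alpha> \<beta> \<midarrow>\<beta>\<rightarrow> L" by auto
  have at_first: "\<exists>L. addition_quotient \<alpha> \<beta> \<midarrow>\<alpha>\<rightarrow> L"
    using addition_quotient_tendsto_first[OF assms] by auto
  consider "z - \<alpha> \<in> \<Lambda>" | "z - \<beta> \<in> \<Lambda>" | "z - \<alpha> \<notin> \<Lambda>" "z - \<beta> \<notin> \<Lambda>" by blast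
  thus ?thesis
  proof cases
    case 1 with at_first shift show ?thesis by blast
  next
    case 2 with at_second shift show ?thesis by blast
  next
    case 3 thus ?thesis using addition_quotient_isCont unfolding isCont_def by blast
  qed
qed

lemma addition_quotient_isolated_singularity: "isolated_singularity_at (addition_quotient \<alpha> \<beta>) z"
proof -
  obtain d where d: "d > 0" "\<And>y. y \<noteq> z \<Longrightarrow> dist y z < d \<Longrightarrow> y - \<alpha> \<notin> \<Lambda> \<and> y - \<beta> \<notin> \<Lambda>"
    using eventually_conj[OF eventually_shift_not_in_lattice[of \<alpha> z] eventually_shift_not_in_lattice[of \<beta> z]]
    unfolding eventually_at by auto
  have "addition_quotient \<alpha> \<beta> holomorphic_on ball z d - {z}"
    unfolding addition_quotient_def[abs_def] using d
    by (intro holomorphic_intros addition_defect_holomorphic) (auto simp: sigma_eq_0_iff dist_commute)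
  thus ?thesis using d by (intro isolated_singularity_at_holomorphic[of _ "ball z d"]) auto
qed

lemma addition_quotient_extension_eq_0:
  assumes "\<alpha> \<notin> \<Lambda>" "\<beta> \<notin> \<Lambda>" "\<alpha> - \<beta> \<notin> \<Lambda>"
  shows "remove_sings (addition_quotient \<alpha> \<beta>) z = 0"
proof -
  define g where "g = remove_sings (addition_quotient \<alpha> \<beta>)"
  have limit: "addition_quotient \<alpha> \<beta> \<midarrow>z\<rightarrow> g z" for z
  proof -
    obtain L where L: "addition_quotient \<alpha> \<beta> \<midarrow>z\<rightarrow> L"
      using addition_quotient_has_limit[OF assms] by blast
    moreover from L have "g z = L" unfolding g_def by (rule remove_sings_eqI)
    ultimately show ?thesis by simp
  qed
  have "isolated_singularity_at (addition_quotient \<alpha> \<beta>) z" for z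
    by (rule addition_quotient_isolated_singularity)
  hence "g analytic_on {z}" for z
    unfolding g_def using limit[unfolded g_def] by (rule remove_sings_analytic_at)
  hence "g analytic_on UNIV"
    by (intro analytic_on_analytic_at[THEN iffD2]) blast
  hence "g holomorphic_on UNIV"
    by (rule analytic_imp_holomorphic)
  moreover have "g (z + l) = g z" if "l \<in> \<Lambda>" for z l
  proof -
    have "(\<lambda>x. addition_quotient \<alpha> \<beta> (x + l)) \<midarrow>z\<rightarrow> g (z + l)"
      using LIM_offset[OF limit[of "z + l"], of l] by simp
    hence "addition_quotient \<alpha> \<beta> \<midarrow>z\<rightarrow> g (z + l)"
      using addition_quotient_periodic[OF that] by simp
    thus ?thesis using limit[of z] by (rule LIM_unique)
  qed
  ultimately have "g z = g 0" by (rule periodic_entire_constant)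
  also have "g 0 = addition_quotient \<alpha> \<beta> 0"
  proof -
    have "0 - \<alpha> \<notin> \<Lambda>" "0 - \<beta> \<notin> \<Lambda>"
      using assms(1,2) lattice_uminus[of "- \<alpha>"] lattice_uminus[of "- \<beta>"] by auto
    hence "addition_quotient \<alpha> \<beta> \<midarrow>0\<rightarrow> addition_quotient \<alpha> \<beta> 0"
      using addition_quotient_isCont isCont_def by blast
    thus ?thesis using limit[of 0] by (rule LIM_unique[symmetric])
  qed
  also have "\<dots> = 0" by (simp add: addition_quotient_def addition_defect_at_0 assms)
  finally show ?thesis by (simp add: g_def)
qed

theorem addition_defect_eq_0:
  assumes "\<alpha> \<notin> \<Lambda>" "\<beta> \<notin> \<Lambda>"
  shows "addition_defect \<alpha> \<beta> x = 0"
proof (cases "\<alpha> - \<beta> \<in> \<Lambda>")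
  case True
  thus ?thesis using addition_defect_degenerate assms by blast
next
  case False
  have vanish: "addition_defect \<alpha> \<beta> y = 0" if "y - \<alpha> \<notin> \<Lambda>" "y - \<beta> \<notin> \<Lambda>" for y
  proof -
    have "addition_quotient \<alpha> \<beta> \<midarrow>y\<rightarrow> addition_quotient \<alpha> \<beta> y"
      using addition_quotient_isCont[OF that] isCont_def by blast
    hence "addition_quotient \<alpha> \<beta> y = remove_sings (addition_quotient \<alpha> \<beta>) y"
      by (rule remove_sings_eqI[symmetric])
    thus ?thesis
      using addition_quotient_extension_eq_0[OF assms False] that
      by (simp add: addition_quotient_def sigma_eq_0_iff)
  qed
  have "addition_defect \<alpha> \<beta> \<midarrow>x\<rightarrow> addition_defect \<alpha> \<beta> x"
    using holomorphic_on_imp_continuous_on[OF addition_defect_holomorphic[of \<alpha> \<beta> UNIV]]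
    by (simp add: continuous_on_eq_continuous_at isCont_def)
  moreover have "addition_defect \<alpha> \<beta> \<midarrow>x\<rightarrow> 0"
  proof (rule Lim_transform_eventually[OF tendsto_const])
    show "eventually (\<lambda>y. 0 = addition_defect \<alpha> \<beta> y) (at x)"
      using eventually_conj[OF eventually_shift_not_in_lattice[of \<alpha> x] eventually_shift_not_in_lattice[of \<beta> x]]
      by eventually_elim (simp add: vanish)
  qed
  ultimately show ?thesis by (rule LIM_unique)
qed

end

section \<open>Wronskians\<close>

definition wronskian :: "nat \<Rightarrow> (nat \<Rightarrow> complex \<Rightarrow> complex) \<Rightarrow> complex \<Rightarrow> complex" where
  "wronskian n f x = Determinant.det (Matrix.mat n n (\<lambda>(i, j). (deriv ^^ i) (f j) x))"

lemma prod_list_map_upt: "prod_list (map f [0..<n]) = (\<Prod>i<n. f i)"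
  by (induction n) (auto simp: lessThan_Suc mult.commute)

lemma det_diagonal_mat: "Determinant.det (Matrix.mat n n (\<lambda>(i, j). if i = j then d j else 0)) = (\<Prod>j<n. d j)"
proof -
  have "Determinant.det (Matrix.mat n n (\<lambda>(i, j). if i = j then d j else 0))
          = prod_list (diag_mat (Matrix.mat n n (\<lambda>(i, j). if i = j then d j else (0 :: 'a))))"
    by (rule det_lower_triangular[of n]) auto
  also have "diag_mat (Matrix.mat n n (\<lambda>(i, j). if i = j then d j else 0)) = map d [0..<n]"
    by (auto simp: diag_mat_def)
  finally show ?thesis by (simp add: prod_list_map_upt)
qed

lemma wronskian_cong:
  assumes "open S" "x \<in> S" "\<And>j y. j < n \<Longrightarrow> y \<in> S \<Longrightarrow> f j y = g j y"
  shows "wronskian n f x = wronskian n g x"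
proof -
  have "(deriv ^^ i) (f j) x = (deriv ^^ i) (g j) x" if "j < n" for i j
  proof (rule higher_deriv_cong_ev)
    show "eventually (\<lambda>y. f j y = g j y) (nhds x)"
      using eventually_nhds_in_open[OF assms(1,2)] by eventually_elim (use assms(3) that in auto)
  qed auto
  thus ?thesis unfolding wronskian_def by (intro arg_cong[where f = Determinant.det] eq_matI) auto
qed

text \<open>By Leibniz' rule the Wronskian matrix of \<open>f\<^sub>j h\<close> is that of the \<open>f\<^sub>j\<close> multiplied from the left
  by a lower triangular matrix with diagonal \<open>h\<close>.\<close>
lemma wronskian_mult:
  assumes S: "open S" "x \<in> S" and f: "\<And>j. j < n \<Longrightarrow> f j holomorphic_on S" and h: "h holomorphic_on S"
  shows "wronskian n (\<lambda>j y. f j y * h y) x = h x ^ n * wronskian n f x"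
proof -
  define H where "H = Matrix.mat n n (\<lambda>(k, j). (deriv ^^ k) (f j) x)"
  define L where "L = Matrix.mat n n (\<lambda>(i, k). if k \<le> i then of_nat (i choose k) * (deriv ^^ (i - k)) h x else 0)"
  have HL: "H \<in> carrier_mat n n" "L \<in> carrier_mat n n" by (auto simp: H_def L_def)
  have eq: "Matrix.mat n n (\<lambda>(i, j). (deriv ^^ i) (\<lambda>y. f j y * h y) x) = L * H"
  proof (rule eq_matI)
    fix i j assume "i < dim_row (L * H)" "j < dim_col (L * H)"
    hence i: "i < n" and j: "j < n" by (auto simp: L_def H_def)
    have "(L * H) $$ (i, j) = (\<Sum>k\<in>{0..<n}. L $$ (i, k) * H $$ (k, j))"
      using i j by (simp add: L_def H_def scalar_prod_def)
    also have "\<dots> = (\<Sum>k\<in>{0..<n} \<inter> {k. k \<le> i}. of_nat (i choose k) * (deriv ^^ k) (f j) x * (deriv ^^ (i - k)) h x)"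
      using i j by (subst sum.inter_restrict) (auto simp: L_def H_def intro!: sum.cong)
    also have "{0..<n} \<inter> {k. k \<le> i} = {0..i}" using i by auto
    also have "(\<Sum>k=0..i. of_nat (i choose k) * (deriv ^^ k) (f j) x * (deriv ^^ (i - k)) h x)
                 = (deriv ^^ i) (\<lambda>y. f j y * h y) x"
      by (rule higher_deriv_mult[OF f[OF j] h S, symmetric])
    finally show "Matrix.mat n n (\<lambda>(i, j). (deriv ^^ i) (\<lambda>y. f j y * h y) x) $$ (i, j) = (L * H) $$ (i, j)"
      using i j by simp
  qed (auto simp: L_def H_def)
  have det_L: "Determinant.det L = h x ^ n"
  proof -
    have "Determinant.det L = prod_list (diag_mat L)"
      by (rule det_lower_triangular[of n]) (auto simp: L_def)
    also have "diag_mat L = map (\<lambda>i. h x) [0..<n]" by (auto simp: diag_mat_def L_def)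
    finally show ?thesis by (simp add: prod_list_map_upt)
  qed
  show ?thesis unfolding wronskian_def eq det_mult[OF HL(2,1)] det_L by (simp add: H_def)
qed

lemma wronskian_cmult:
  assumes S: "open S" "x \<in> S" and f: "\<And>j. j < n \<Longrightarrow> f j holomorphic_on S"
  shows "wronskian n (\<lambda>j y. c j * f j y) x = (\<Prod>j<n. c j) * wronskian n f x"
proof -
  define H where "H = Matrix.mat n n (\<lambda>(i, j). (deriv ^^ i) (f j) x)"
  define D where "D = Matrix.mat n n (\<lambda>(i, j). if i = j then c j else 0)"
  have HD: "H \<in> carrier_mat n n" "D \<in> carrier_mat n n" by (auto simp: H_def D_def)
  have eq: "Matrix.mat n n (\<lambda>(i, j). (deriv ^^ i) (\<lambda>y. c j * f j y) x) = H * D"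
  proof (rule eq_matI)
    fix i j assume "i < dim_row (H * D)" "j < dim_col (H * D)"
    hence i: "i < n" and j: "j < n" by (auto simp: D_def H_def)
    have "(H * D) $$ (i, j) = (\<Sum>l\<in>{0..<n}. H $$ (i, l) * D $$ (l, j))"
      using i j by (simp add: D_def H_def scalar_prod_def)
    also have "\<dots> = (deriv ^^ i) (f j) x * c j"
      using i j by (simp add: D_def H_def if_distrib[of "(*) _"] sum.delta cong: if_cong)
    also have "\<dots> = (deriv ^^ i) (\<lambda>y. c j * f j y) x"
      using higher_deriv_cmult[OF f[OF j] S(2,1), of i "c j"] by simp
    finally show "Matrix.mat n n (\<lambda>(i, j). (deriv ^^ i) (\<lambda>y. c j * f j y) x) $$ (i, j) = (H * D) $$ (i, j)"
      using i j by simp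
  qed (auto simp: D_def H_def)
  have "Determinant.det D = (\<Prod>j<n. c j)" unfolding D_def by (rule det_diagonal_mat)
  thus ?thesis unfolding wronskian_def eq det_mult[OF HD] by (simp add: H_def)
qed

lemma wronskian_reduce_first_const:
  assumes S: "open S" "x \<in> S" and f0: "\<And>y. y \<in> S \<Longrightarrow> f 0 y = 1"
  shows "wronskian (Suc n) f x = wronskian n (\<lambda>j. deriv (f (Suc j))) x"
proof -
  define A where "A = Matrix.mat (Suc n) (Suc n) (\<lambda>(i, j). (deriv ^^ i) (f j) x)"
  have A: "A \<in> carrier_mat (Suc n) (Suc n)" by (simp add: A_def)
  have first_column: "(deriv ^^ i) (f 0) x = (if i = 0 then 1 else 0)" for i
  proof -
    have "(deriv ^^ i) (f 0) x = (deriv ^^ i) (\<lambda>_. 1) x"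
    proof (rule higher_deriv_cong_ev)
      show "eventually (\<lambda>y. f 0 y = 1) (nhds x)"
        using eventually_nhds_in_open[OF S] by eventually_elim (use f0 in auto)
    qed auto
    thus ?thesis by simp
  qed
  have "Determinant.det A = (\<Sum>i<Suc n. A $$ (i, 0) * cofactor A i 0)"
    by (rule laplace_expansion_column[OF A]) simp
  also have "\<dots> = (\<Sum>i<Suc n. if i = 0 then cofactor A 0 0 else 0)"
    by (intro sum.cong refl) (auto simp: A_def first_column)
  also have "\<dots> = cofactor A 0 0" by simp
  also have "\<dots> = Determinant.det (mat_delete A 0 0)" by (simp add: cofactor_def)
  also have "mat_delete A 0 0 = Matrix.mat n n (\<lambda>(i, j). (deriv ^^ i) (deriv (f (Suc j))) x)"
    by (rule eq_matI) (auto simp: mat_delete_def A_def funpow_Suc_right simp del: funpow.simps)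
  finally show ?thesis by (simp add: wronskian_def A_def)
qed

lemma wronskian_divide_first:
  assumes S: "open S" "x \<in> S" and f: "\<And>j. j < Suc n \<Longrightarrow> f j holomorphic_on S"
    and nonzero: "\<And>y. y \<in> S \<Longrightarrow> f 0 y \<noteq> 0"
  shows "wronskian (Suc n) f x = f 0 x ^ Suc n * wronskian n (\<lambda>j. deriv (\<lambda>y. f (Suc j) y / f 0 y)) x"
proof -
  have "wronskian (Suc n) f x = wronskian (Suc n) (\<lambda>j y. f j y / f 0 y * f 0 y) x"
    using nonzero by (intro wronskian_cong[OF S]) auto
  also have "\<dots> = f 0 x ^ Suc n * wronskian (Suc n) (\<lambda>j y. f j y / f 0 y) x"
    using f nonzero by (intro wronskian_mult[OF S] holomorphic_intros) auto
  also have "wronskian (Suc n) (\<lambda>j y. f j y / f 0 y) x = wronskian n (\<lambda>j. deriv (\<lambda>y. f (Suc j) y / f 0 y)) x"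
    using nonzero by (intro wronskian_reduce_first_const[OF S]) auto
  finally show ?thesis .
qed

lemma wronskian_shift:
  assumes f: "\<And>j. j < n \<Longrightarrow> f j holomorphic_on T" and T: "open T" "x - a \<in> T"
  shows "wronskian n (\<lambda>j y. f j (y - a)) x = wronskian n f (x - a)"
proof -
  define S where "S = (\<lambda>t. a + t) ` T"
  have S: "open S" "x \<in> S"
    using T open_translation[OF T(1), of a] by (auto simp: S_def image_iff intro: bexI[of _ "x - a"])
  have "(deriv ^^ i) (\<lambda>w. f j (1 * w + (- a))) x = 1 ^ i * (deriv ^^ i) (f j) (1 * x + (- a))" if "j < n" for i j
    by (rule higher_deriv_compose_linear'[OF f[OF that] S(1) T(1) S(2)]) (auto simp: S_def)
  thus ?thesis unfolding wronskian_def by (intro arg_cong[where f = Determinant.det] eq_matI) auto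
qed

lemma wronskian_expand:
  "wronskian n f y = (\<Sum>p\<in>{p. p permutes {0..<n}}. signof p * (\<Prod>i=0..<n. (deriv ^^ i) (f (p i)) y))"
  unfolding wronskian_def det_def'[OF mat_carrier]
  by (intro sum.cong refl arg_cong2[where f = "(*)"] prod.cong) (auto simp: permutes_in_image)

lemma prod_lower_triangle_Suc:
  "(\<Prod>j<Suc n. \<Prod>i<j. f i j) = (\<Prod>j<n. f 0 (Suc j)) * (\<Prod>j<n. \<Prod>i<j. f (Suc i) (Suc j))"
  by (simp add: prod.lessThan_Suc_shift prod.distrib del: prod.lessThan_Suc)

section \<open>The determinant of derivatives of \<open>\<Phi>\<close>\<close>

context period_lattice
begin

abbreviation \<Phi> where "\<Phi> \<equiv> Phi w1 w2"

lemma Phi_holomorphic: "a \<notin> \<Lambda> \<Longrightarrow> (\<lambda>y. \<Phi> y a) holomorphic_on - \<Lambda>"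
  unfolding Phi_def by (intro holomorphic_intros) (auto simp: sigma_eq_0_iff)

lemma open_shifted_lattice_complement: "open {y. y - a \<notin> \<Lambda>}"
  using continuous_open_vimage[OF open_lattice_complement, of "\<lambda>y. y - a"]
  by (simp add: vimage_def Collect_neg_eq continuous_intros)

lemma Phi_quotient_has_derivative:
  assumes a: "a \<notin> \<Lambda>" and b: "b \<notin> \<Lambda>" and y: "y \<notin> \<Lambda>" "y - a \<notin> \<Lambda>"
  shows "((\<lambda>y. \<Phi> y b / \<Phi> y a) has_field_derivative \<Phi> a b * \<Phi> (y - a) b / \<Phi> y a) (at y)"
proof -
  define V where "V = - \<Lambda> \<inter> {y. y - a \<notin> \<Lambda>}"
  have V: "open V" "y \<in> V"
    using y open_lattice_complement open_shifted_lattice_complement by (auto simp: V_def)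
  define c where "c = \<sigma> a / \<sigma> b"
  define d where "d = \<zeta> b - \<zeta> a"
  define R where "R = (\<lambda>y. c * (\<sigma> (y - b) / \<sigma> (y - a)) * exp (y * d))"
  have sa: "\<sigma> a \<noteq> 0" and sb: "\<sigma> b \<noteq> 0" and sy: "\<sigma> y \<noteq> 0" "\<sigma> (y - a) \<noteq> 0"
    using a b y by (simp_all add: sigma_nonzero)
  have R_eq: "\<Phi> v b / \<Phi> v a = R v" if "v \<in> V" for v
  proof -
    have "\<sigma> v \<noteq> 0" "\<sigma> (v - a) \<noteq> 0" using that by (simp_all add: V_def sigma_nonzero)
    thus ?thesis using sa sb by (simp add: Phi_def R_def c_def d_def exp_diff field_simps)
  qed
  have "(R has_field_derivative
      c * ((deriv \<sigma> (y - b) * \<sigma> (y - a) - \<sigma> (y - b) * deriv \<sigma> (y - a)) / (\<sigma> (y - a) * \<sigma> (y - a))) * exp (y * d)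
      + exp (y * d) * d * (c * (\<sigma> (y - b) / \<sigma> (y - a)))) (at y)"
    unfolding R_def using sy
    by (intro DERIV_mult DERIV_cmult DERIV_divide sigma_diff_has_derivative) (auto intro!: derivative_eq_intros)
  also have "c * ((deriv \<sigma> (y - b) * \<sigma> (y - a) - \<sigma> (y - b) * deriv \<sigma> (y - a)) / (\<sigma> (y - a) * \<sigma> (y - a))) * exp (y * d)
      + exp (y * d) * d * (c * (\<sigma> (y - b) / \<sigma> (y - a)))
      = c * exp (y * d) / (\<sigma> (y - a) * \<sigma> (y - a)) *
        (\<sigma> (y - a) * deriv \<sigma> (y - b) - deriv \<sigma> (y - a) * \<sigma> (y - b) + d * (\<sigma> (y - a) * \<sigma> (y - b)))"
    using sy by (simp add: field_simps)
  also have "\<sigma> (y - a) * deriv \<sigma> (y - b) - deriv \<sigma> (y - a) * \<sigma> (y - b) + d * (\<sigma> (y - a) * \<sigma> (y - b))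
      = \<sigma> (a - b) / (\<sigma> a * \<sigma> b) * (\<sigma> y * \<sigma> (y - a - b))"
    using addition_defect_eq_0[OF a b, of y] by (simp add: addition_defect_def d_def algebra_simps)
  also have "exp (y * d) = exp (a * \<zeta> b) * exp ((y - a) * \<zeta> b) / exp (y * \<zeta> a)"
    by (simp add: d_def exp_add[symmetric] exp_diff[symmetric] algebra_simps)
  also have "c * (exp (a * \<zeta> b) * exp ((y - a) * \<zeta> b) / exp (y * \<zeta> a)) / (\<sigma> (y - a) * \<sigma> (y - a))
               * (\<sigma> (a - b) / (\<sigma> a * \<sigma> b) * (\<sigma> y * \<sigma> (y - a - b)))
             = \<Phi> a b * \<Phi> (y - a) b / \<Phi> y a"
    unfolding Phi_def c_def using sa sb sy by (simp add: field_simps)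
  finally show ?thesis
    by (rule has_field_derivative_transform_within_open[OF _ V]) (rule R_eq[symmetric])
qed

definition det_closed_form :: "nat \<Rightarrow> (nat \<Rightarrow> complex) \<Rightarrow> complex \<Rightarrow> complex" where
  "det_closed_form n \<alpha> x = \<sigma> (x - (\<Sum>j<n. \<alpha> j)) * (\<Prod>j<n. \<Prod>i<j. \<sigma> (\<alpha> i - \<alpha> j))
     / (\<sigma> x * (\<Prod>i<n. \<sigma> (\<alpha> i) ^ n)) * exp (x * (\<Sum>j<n. \<zeta> (\<alpha> j)))"

lemma det_closed_form_Suc:
  assumes \<alpha>: "\<And>j. j < Suc n \<Longrightarrow> \<alpha> j \<notin> \<Lambda>" and x: "x \<notin> \<Lambda>" "x - \<alpha> 0 \<notin> \<Lambda>"
  shows "det_closed_form (Suc n) \<alpha> x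
           = \<Phi> x (\<alpha> 0) * (\<Prod>j<n. \<Phi> (\<alpha> 0) (\<alpha> (Suc j))) * det_closed_form n (\<lambda>j. \<alpha> (Suc j)) (x - \<alpha> 0)"
proof -
  define a where "a = \<alpha> 0"
  define S where "S = (\<Sum>j<n. \<alpha> (Suc j))"
  define Z where "Z = (\<Sum>j<n. \<zeta> (\<alpha> (Suc j)))"
  define V where "V = (\<Prod>j<n. \<Prod>i<j. \<sigma> (\<alpha> (Suc i) - \<alpha> (Suc j)))"
  define D where "D = (\<Prod>i<n. \<sigma> (\<alpha> (Suc i)) ^ n)"
  define K where "K = (\<Prod>j<n. \<sigma> (a - \<alpha> (Suc j)))"
  define B where "B = (\<Prod>j<n. \<sigma> (\<alpha> (Suc j)))"
  have nonzero: "\<sigma> (\<alpha> j) \<noteq> 0" if "j < Suc n" for j using \<alpha>[OF that] by (rule sigma_nonzero)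
  have "\<sigma> a \<noteq> 0" "\<sigma> x \<noteq> 0" "\<sigma> (x - a) \<noteq> 0" "B \<noteq> 0" "D \<noteq> 0"
    using nonzero[of 0] x nonzero by (auto simp: a_def B_def D_def sigma_nonzero prod_zero_iff)
  moreover have prod_Phi: "(\<Prod>j<n. \<Phi> a (\<alpha> (Suc j))) = K * exp (a * Z) / (\<sigma> a ^ n * B)"
    by (simp add: Phi_def K_def B_def Z_def prod_dividef prod.distrib exp_sum sum_distrib_left)
  moreover have expand_n: "det_closed_form n (\<lambda>j. \<alpha> (Suc j)) (x - a) = \<sigma> (x - a - S) * V / (\<sigma> (x - a) * D) * exp ((x - a) * Z)"
    by (simp add: det_closed_form_def S_def V_def D_def Z_def)
  moreover have expand_Suc: "det_closed_form (Suc n) \<alpha> x = \<sigma> (x - a - S) * (K * V) / (\<sigma> x * (\<sigma> a ^ Suc n * (B * D)))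
      * (exp (x * \<zeta> a) * exp (a * Z) * exp ((x - a) * Z))"
  proof -
    have "(\<Prod>i<Suc n. \<sigma> (\<alpha> i) ^ Suc n) = \<sigma> a ^ Suc n * (B * D)"
      by (simp add: prod.lessThan_Suc_shift a_def B_def D_def prod.distrib del: prod.lessThan_Suc)
    moreover have "exp (x * (\<zeta> a + Z)) = exp (x * \<zeta> a) * exp (a * Z) * exp ((x - a) * Z)"
      by (simp add: exp_add[symmetric] algebra_simps)
    ultimately show ?thesis
      by (simp add: det_closed_form_def prod_lower_triangle_Suc sum.lessThan_Suc_shift a_def S_def Z_def K_def V_def
          algebra_simps del: sum.lessThan_Suc prod.lessThan_Suc)
  qed
  ultimately show ?thesis
    unfolding a_def[symmetric] prod_Phi expand_n expand_Suc Phi_def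
    by (simp add: field_simps power_Suc)
qed

lemma wronskian_Phi_Suc:
  assumes \<alpha>: "\<And>j. j < Suc n \<Longrightarrow> \<alpha> j \<notin> \<Lambda>" and x: "x \<notin> \<Lambda>" "x - \<alpha> 0 \<notin> \<Lambda>"
  shows "wronskian (Suc n) (\<lambda>j y. \<Phi> y (\<alpha> j)) x
           = \<Phi> x (\<alpha> 0) * (\<Prod>j<n. \<Phi> (\<alpha> 0) (\<alpha> (Suc j))) * wronskian n (\<lambda>j y. \<Phi> y (\<alpha> (Suc j))) (x - \<alpha> 0)"
proof -
  define a where "a = \<alpha> 0"
  define V where "V = - \<Lambda> \<inter> {y. y - a \<notin> \<Lambda>}"
  have V: "open V" "x \<in> V"
    using x open_lattice_complement open_shifted_lattice_complement by (auto simp: V_def a_def)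
  have a: "a \<notin> \<Lambda>" using \<alpha>[of 0] by (simp add: a_def)
  have nonzero: "\<Phi> y a \<noteq> 0" if "y \<in> V" for y
    using that a by (auto simp: Phi_def V_def sigma_nonzero)
  have holo: "(\<lambda>y. \<Phi> y (\<alpha> j)) holomorphic_on V" if "j < Suc n" for j
    using Phi_holomorphic[OF \<alpha>[OF that]] by (rule holomorphic_on_subset) (auto simp: V_def)
  define \<Psi> where "\<Psi> = (\<lambda>j y. \<Phi> (y - a) (\<alpha> (Suc j)))"
  have \<Psi>: "\<Psi> j holomorphic_on V" if "j < n" for j
  proof -
    have "(\<lambda>y. \<Phi> y (\<alpha> (Suc j))) \<circ> (\<lambda>y. y - a) holomorphic_on V"
      using that by (intro holomorphic_on_compose_gen[OF _ Phi_holomorphic[OF \<alpha>]])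
        (auto simp: V_def intro!: holomorphic_intros)
    thus ?thesis by (simp add: \<Psi>_def o_def)
  qed
  have "wronskian (Suc n) (\<lambda>j y. \<Phi> y (\<alpha> j)) x
          = \<Phi> x a ^ Suc n * wronskian n (\<lambda>j. deriv (\<lambda>y. \<Phi> y (\<alpha> (Suc j)) / \<Phi> y a)) x"
    unfolding a_def by (rule wronskian_divide_first[OF V holo]) (use nonzero in \<open>auto simp: a_def\<close>)
  also have "wronskian n (\<lambda>j. deriv (\<lambda>y. \<Phi> y (\<alpha> (Suc j)) / \<Phi> y a)) x
               = wronskian n (\<lambda>j y. \<Phi> a (\<alpha> (Suc j)) * \<Psi> j y * (1 / \<Phi> y a)) x"
  proof (rule wronskian_cong[OF V])
    fix j y assume "j < n" "y \<in> V"
    hence "((\<lambda>y. \<Phi> y (\<alpha> (Suc j)) / \<Phi> y a) has_field_derivative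
             \<Phi> a (\<alpha> (Suc j)) * \<Phi> (y - a) (\<alpha> (Suc j)) / \<Phi> y a) (at y)"
      using \<alpha> by (intro Phi_quotient_has_derivative a) (auto simp: V_def)
    thus "deriv (\<lambda>y. \<Phi> y (\<alpha> (Suc j)) / \<Phi> y a) y = \<Phi> a (\<alpha> (Suc j)) * \<Psi> j y * (1 / \<Phi> y a)"
      by (simp add: DERIV_imp_deriv \<Psi>_def)
  qed
  also have "\<dots> = (1 / \<Phi> x a) ^ n * wronskian n (\<lambda>j y. \<Phi> a (\<alpha> (Suc j)) * \<Psi> j y) x"
    using \<Psi> holo[of 0] nonzero
    by (intro wronskian_mult[OF V] holomorphic_intros) (auto simp: a_def)
  also have "wronskian n (\<lambda>j y. \<Phi> a (\<alpha> (Suc j)) * \<Psi> j y) x = (\<Prod>j<n. \<Phi> a (\<alpha> (Suc j))) * wronskian n \<Psi> x"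
    by (rule wronskian_cmult[OF V \<Psi>])
  also have "wronskian n \<Psi> x = wronskian n (\<lambda>j y. \<Phi> y (\<alpha> (Suc j))) (x - a)"
    unfolding \<Psi>_def using \<alpha> x open_lattice_complement
    by (intro wronskian_shift[of n _ "- \<Lambda>"] Phi_holomorphic) (auto simp: a_def)
  also have "\<Phi> x a ^ Suc n * ((1 / \<Phi> x a) ^ n * ((\<Prod>j<n. \<Phi> a (\<alpha> (Suc j))) * wronskian n (\<lambda>j y. \<Phi> y (\<alpha> (Suc j))) (x - a)))
               = \<Phi> x a * (\<Prod>j<n. \<Phi> a (\<alpha> (Suc j))) * wronskian n (\<lambda>j y. \<Phi> y (\<alpha> (Suc j))) (x - a)"
    using nonzero[OF V(2)] by (simp add: power_one_over)
  finally show ?thesis by (simp add: a_def)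
qed

lemma wronskian_isCont:
  assumes "\<And>j. j < n \<Longrightarrow> \<alpha> j \<notin> \<Lambda>" "x \<notin> \<Lambda>"
  shows "isCont (wronskian n (\<lambda>j y. \<Phi> y (\<alpha> j))) x"
proof -
  have "isCont ((deriv ^^ i) (\<lambda>y. \<Phi> y (\<alpha> j))) x" if "j < n" for i j
    using holomorphic_higher_deriv[OF Phi_holomorphic[OF assms(1)[OF that]] open_lattice_complement]
      assms(2) open_lattice_complement
    by (meson ComplI holomorphic_on_imp_continuous_on continuous_on_eq_continuous_at)
  thus ?thesis
    unfolding wronskian_expand by (intro continuous_intros) (auto simp: permutes_in_image)
qed

lemma det_closed_form_isCont:
  "(\<And>j. j < n \<Longrightarrow> \<alpha> j \<notin> \<Lambda>) \<Longrightarrow> x \<notin> \<Lambda> \<Longrightarrow> isCont (det_closed_form n \<alpha>) x"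
  unfolding det_closed_form_def[abs_def] by (intro continuous_intros) (auto simp: sigma_eq_0_iff prod_zero_iff)

text \<open>At the points \<open>x \<in> \<alpha> 0 + \<Lambda>\<close> excluded by the inductive step, both sides are continuous.\<close>
lemma wronskian_Phi_eq_det_closed_form:
  "(\<And>j. j < n \<Longrightarrow> \<alpha> j \<notin> \<Lambda>) \<Longrightarrow> x \<notin> \<Lambda> \<Longrightarrow> wronskian n (\<lambda>j y. \<Phi> y (\<alpha> j)) x = det_closed_form n \<alpha> x"
proof (induction n arbitrary: \<alpha> x)
  case 0
  thus ?case by (simp add: wronskian_def det_closed_form_def sigma_nonzero)
next
  case (Suc n)
  have step: "wronskian (Suc n) (\<lambda>j y. \<Phi> y (\<alpha> j)) y = det_closed_form (Suc n) \<alpha> y"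
    if "y \<notin> \<Lambda>" "y - \<alpha> 0 \<notin> \<Lambda>" for y
    using Suc.IH[of "\<lambda>j. \<alpha> (Suc j)" "y - \<alpha> 0"] Suc.prems(1) that
    by (simp add: wronskian_Phi_Suc det_closed_form_Suc)
  show ?case
  proof (cases "x - \<alpha> 0 \<in> \<Lambda>")
    case False
    thus ?thesis using Suc.prems(2) by (rule step[rotated])
  next
    case True
    have "det_closed_form (Suc n) \<alpha> \<midarrow>x\<rightarrow> det_closed_form (Suc n) \<alpha> x"
      using det_closed_form_isCont[of "Suc n" \<alpha> x, OF Suc.prems] by (simp add: isCont_def)
    moreover have "eventually (\<lambda>y. det_closed_form (Suc n) \<alpha> y = wronskian (Suc n) (\<lambda>j y. \<Phi> y (\<alpha> j)) y) (at x)"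
      using eventually_conj[OF eventually_not_in_lattice eventually_shift_not_in_lattice[of "\<alpha> 0"]]
      by eventually_elim (simp add: step)
    ultimately have "wronskian (Suc n) (\<lambda>j y. \<Phi> y (\<alpha> j)) \<midarrow>x\<rightarrow> det_closed_form (Suc n) \<alpha> x"
      by (rule Lim_transform_eventually)
    moreover have "wronskian (Suc n) (\<lambda>j y. \<Phi> y (\<alpha> j)) \<midarrow>x\<rightarrow> wronskian (Suc n) (\<lambda>j y. \<Phi> y (\<alpha> j)) x"
      using wronskian_isCont[of "Suc n" \<alpha> x, OF Suc.prems] by (simp add: isCont_def)
    ultimately show ?thesis by (rule LIM_unique[symmetric])
  qed
qed

end

theorem theorem9:
  fixes w1 w2 x :: complex and \<alpha> :: "nat \<Rightarrow> complex" and n :: nat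
  assumes "Im (w2 / w1) > 0"
    and "n \<ge> 1"
    and "x \<notin> lattice w1 w2"
    and "\<And>j. j < n \<Longrightarrow> \<alpha> j \<notin> lattice w1 w2"
  shows "wsigma w1 w2 (x - (\<Sum>j<n. \<alpha> j)) * (\<Prod>j<n. \<Prod>i<j. wsigma w1 w2 (\<alpha> i - \<alpha> j))
           / (wsigma w1 w2 x * (\<Prod>i<n. wsigma w1 w2 (\<alpha> i) ^ n))
           * exp (x * (\<Sum>j<n. wzeta w1 w2 (\<alpha> j)))
         = Determinant.det (Matrix.mat n n (\<lambda>(i, j). ((deriv ^^ i) (\<lambda>y. Phi w1 w2 y (\<alpha> j))) x))"
proof -
  interpret period_lattice w1 w2 by unfold_locales (rule assms(1))
  have "wronskian n (\<lambda>j y. \<Phi> y (\<alpha> j)) x = det_closed_form n \<alpha> x"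
    using assms(3,4) by (rule wronskian_Phi_eq_det_closed_form[rotated])
  thus ?thesis by (simp add: wronskian_def det_closed_form_def)
qed

end
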